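(* Let $(\Omega,\mathcal F,\mathbb P)$ be a complete probability space, $d\ge1$, $\beta\in(0,1)$, and let $\{\mathcal F(\tilde s)\}_{\tilde s\in\mathbb N_0^d}$ satisfy (F1) and (F2). For each $i=1,\dots,d$ let $\{h_i'(t)\}_{t\in\mathbb N}$ be positive, decreasing, bounded and $\mathbf F_i$-predictable. Then for every $\tilde s\in\mathbb N_0^d$, $$\Phi'(\tilde s)=\mathbb E\Big[\int_0^\infty\big(1-\beta^{\tau(m;\tilde s)}\big)\,\mathrm dm\,\Big|\,\mathcal F(\tilde s)\Big]=(1-\beta)\,\mathbb E\Big[\sum_{t=0}^\infty\beta^tN(t;\tilde s)\,\Big|\,\mathcal F(\tilde s)\Big]\quad\text{a.s.}$$ Moreover, the essential supremum defining $\Phi'(\tilde s)$ is attained by an allocation strategy $\tilde T\in\mathcal A(\tilde s)$ if and only if $\tilde T$ satisfies the synchronization identity $$\sum_{i=1}^d\big[(T_i(t)-s_i)\wedge(\sigma_i(s_i;m)-s_i)\big]=t\wedge\tau(m;\tilde s)\qquad\forall\,t\in\mathbb N_0,\ m>0.$$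
   Context: (F1): $\mathcal F(\tilde s)\subseteq\mathcal F(\tilde r)$ for $\tilde s\le\tilde r$ (componentwise); (F2): $\mathcal F(\tilde 0)$ contains all null sets. $\tilde e_i$ is the $i$th unit vector, $\mathcal F_i(t):=\mathcal F(t\tilde e_i)$, $\mathbf F_i=\{\mathcal F_i(t)\}_{t\in\mathbb N_0}$; predictable means $h_i'(t)$ is $\mathcal F_i(t-1)$-measurable. For each $i$ (with $\beta^\infty:=0$ and $\mathcal S_i(t)$ the $\mathbf F_i$-stopping times valued in $\{t,t+1,\dots\}\cup\{\infty\}$): $V_i(t;m):=\operatorname{ess\,sup}_{\tau\in\mathcal S_i(t)}\mathbb E[\sum_{u=t}^{\tau-1}\beta^{u-t}h_i'(u+1)+m\beta^{\tau-t}\mid\mathcal F_i(t)]$, $m\ge0$; $\sigma_i(t;m):=\inf\{\theta\ge t:V_i(\theta;m)=m\}$ ($\inf\emptyset=\infty$). Further $\tau(m;\tilde s):=\sum_{i=1}^d(\sigma_i(s_i;m)-s_i)$ and $N(t;\tilde s):=\inf\{m\ge0:\tau(m;\tilde s)\le t\}$. Allocation strategy for $\tilde s$: $\mathbb N_0^d$-valued $\{\tilde T(t)\}_{t\in\mathbb N_0}$ with $\tilde T(0)=\tilde s$, $\tilde T(t+1)=\tilde T(t)+\tilde e_j$ for some $j$, and $\{\tilde T(t+1)=\tilde T(t)+\tilde e_j,\tilde T(t)=\tilde r\}\in\mathcal F(\tilde r)$ for all $j,\tilde r$; $\mathcal A(\tilde s)$ is the set of them. $\mathcal R'(\tilde T):=\sum_{i=1}^d\sum_{t=0}^\infty\beta^th_i'(T_i(t+1))(T_i(t+1)-T_i(t))$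 and $\Phi'(\tilde s):=\operatorname{ess\,sup}_{\tilde T\in\mathcal A(\tilde s)}\mathbb E[\mathcal R'(\tilde T)\mid\mathcal F(\tilde s)]$. *)

theory Defs
  imports "HOL-Probability.Probability"
begin

text \<open>Multi-indices in N_0^d are functions 'i => nat over a finite index type 'i
  (d = CARD('i) >= 1); the order on them is the componentwise order on functions.\<close>

definition unitv :: "'i \<Rightarrow> ('i \<Rightarrow> nat)" where
  "unitv i = (\<lambda>k. if k = i then 1 else 0)"

definition tvec :: "nat \<Rightarrow> 'i \<Rightarrow> ('i \<Rightarrow> nat)" where
  "tvec t i = (\<lambda>k. if k = i then t else 0)"

definition epow :: "real \<Rightarrow> enat \<Rightarrow> real" where
  "epow b x = (case x of enat n \<Rightarrow> b ^ n | \<infinity> \<Rightarrow> 0)"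

definition is_ess_sup :: "'a measure \<Rightarrow> ('a \<Rightarrow> real) set \<Rightarrow> ('a \<Rightarrow> real) \<Rightarrow> bool" where
  "is_ess_sup M XS Y \<longleftrightarrow>
     Y \<in> borel_measurable M \<and>
     (\<forall>X\<in>XS. AE \<omega> in M. X \<omega> \<le> Y \<omega>) \<and>
     (\<forall>Z\<in>borel_measurable M. (\<forall>X\<in>XS. AE \<omega> in M. X \<omega> \<le> Z \<omega>) \<longrightarrow> (AE \<omega> in M. Y \<omega> \<le> Z \<omega>))"

definition stop_times :: "'a measure \<Rightarrow> (('i \<Rightarrow> nat) \<Rightarrow> 'a measure) \<Rightarrow> 'i \<Rightarrow> nat \<Rightarrow> ('a \<Rightarrow> enat) set" where
  "stop_times M F i t = {\<tau>. (\<forall>\<omega>\<in>space M. enat t \<le> \<tau> \<omega>) \<and>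
       (\<forall>u. {\<omega>\<in>space M. \<tau> \<omega> \<le> enat u} \<in> sets (F (tvec u i)))}"

definition payoff :: "real \<Rightarrow> ('i \<Rightarrow> nat \<Rightarrow> 'a \<Rightarrow> real) \<Rightarrow> 'i \<Rightarrow> nat \<Rightarrow> real \<Rightarrow> ('a \<Rightarrow> enat) \<Rightarrow> 'a \<Rightarrow> real" where
  "payoff \<beta> h i t m \<tau> \<omega> =
     (\<Sum>u. if t \<le> u \<and> enat u < \<tau> \<omega> then \<beta> ^ (u - t) * h i (u + 1) \<omega> else 0)
     + m * epow \<beta> (\<tau> \<omega> - enat t)"

definition sigma_idx :: "('i \<Rightarrow> nat \<Rightarrow> real \<Rightarrow> 'a \<Rightarrow> real) \<Rightarrow> 'i \<Rightarrow> nat \<Rightarrow> real \<Rightarrow> 'a \<Rightarrow> enat" where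
  "sigma_idx V i t m \<omega> =
     (if \<exists>\<theta>\<ge>t. V i \<theta> m \<omega> = m then enat (LEAST \<theta>. t \<le> \<theta> \<and> V i \<theta> m \<omega> = m) else \<infinity>)"

definition tau_tot :: "('i::finite \<Rightarrow> nat \<Rightarrow> real \<Rightarrow> 'a \<Rightarrow> real) \<Rightarrow> real \<Rightarrow> ('i \<Rightarrow> nat) \<Rightarrow> 'a \<Rightarrow> enat" where
  "tau_tot V m s \<omega> = (\<Sum>i\<in>UNIV. sigma_idx V i (s i) m \<omega> - enat (s i))"

definition N_idx :: "('i::finite \<Rightarrow> nat \<Rightarrow> real \<Rightarrow> 'a \<Rightarrow> real) \<Rightarrow> nat \<Rightarrow> ('i \<Rightarrow> nat) \<Rightarrow> 'a \<Rightarrow> real" where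
  "N_idx V t s \<omega> = Inf {m. 0 \<le> m \<and> tau_tot V m s \<omega> \<le> enat t}"

definition alloc :: "'a measure \<Rightarrow> (('i \<Rightarrow> nat) \<Rightarrow> 'a measure) \<Rightarrow> ('i \<Rightarrow> nat) \<Rightarrow> (nat \<Rightarrow> 'a \<Rightarrow> ('i \<Rightarrow> nat)) set" where
  "alloc M F s = {T. (\<forall>\<omega>\<in>space M. T 0 \<omega> = s) \<and>
      (\<forall>t. \<forall>\<omega>\<in>space M. \<exists>j. T (Suc t) \<omega> = (\<lambda>k. T t \<omega> k + unitv j k)) \<and>
      (\<forall>t j r. {\<omega>\<in>space M. T (Suc t) \<omega> = (\<lambda>k. T t \<omega> k + unitv j k) \<and> T t \<omega> = r} \<in> sets (F r))}"

definition reward :: "real \<Rightarrow> ('i::finite \<Rightarrow> nat \<Rightarrow> 'a \<Rightarrow> real) \<Rightarrow> (nat \<Rightarrow> 'a \<Rightarrow> ('i \<Rightarrow> nat)) \<Rightarrow> 'a \<Rightarrow> real" where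
  "reward \<beta> h T \<omega> = (\<Sum>i\<in>UNIV. \<Sum>t. \<beta> ^ t * h i (T (Suc t) \<omega> i) \<omega> * real (T (Suc t) \<omega> i - T t \<omega> i))"

end

(*
  In the deteriorating case the Gittins index is myopic: V_i(theta; m) = m exactly when
  h_i'(theta + 1) <= (1 - beta) m.  Playing once more and then retiring beats retiring when the next
  reward is larger; otherwise, on an event known at time theta by predictability, no stopping rule
  beats m because later rewards are smaller.  So sigma_i, tau and N are almost surely explicit
  functions of the reward paths, and the problem becomes deterministic path by path.

  Each collected reward y_t is (1 - beta) times the length of the level set
  {m >= 0. (1 - beta) m < y_t}, so the reward of an allocation is (1 - beta) times the integral over
  m of sum_t beta^t [(1 - beta) m < y_t].  At level m at most min(t, tau(m; s)) of the first t
  rewards exceed (1 - beta) m, because arm i has only sigma_i(s_i; m) - s_i such pulls.  Summation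
  by parts then bounds the discounted count by (1 - beta^tau(m)) / (1 - beta), with equality iff
  the bound is attained for every t: the synchronization identity.  The greedy allocation, which
  always pulls an arm with the largest next reward, attains it, is adapted, and collects
  (1 - beta) N(t; s) at time t.
*)
theory Submission
  imports Defs
begin

section \<open>Counting hits and discounting\<close>

definition hits :: "(nat \<Rightarrow> bool) \<Rightarrow> nat \<Rightarrow> nat" where
  "hits P t = (\<Sum>u<t. of_bool (P u))"

lemma hits_0 [simp]: "hits P 0 = 0"
  by (simp add: hits_def)

lemma hits_Suc [simp]: "hits P (Suc t) = hits P t + of_bool (P t)"
  by (simp add: hits_def)

lemma hits_le: "hits P t \<le> t"
  by (induction t) auto

lemma hits_eq_iff: "hits P t = t \<longleftrightarrow> (\<forall>u<t. P u)"
proof (induction t)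
  case (Suc t)
  then show ?case
    using hits_le[of P t] by (cases "P t") (auto simp: less_Suc_eq)
qed simp

lemma hits_eq_imp_eq: "(\<And>t. hits P t = hits Q t) \<Longrightarrow> P t = Q t"
  using hits_Suc[of P t] hits_Suc[of Q t] by (metis add_left_cancel of_bool_eq_iff)

lemma hits_enat_less: "enat (hits (\<lambda>u. enat u < x) t) = min (enat t) x"
proof (induction t)
  case (Suc t)
  then show ?case
    by (cases x) (auto simp: min_def Suc_ile_eq one_enat_def)
qed (simp add: zero_enat_def[symmetric])

definition discounted :: "real \<Rightarrow> (nat \<Rightarrow> bool) \<Rightarrow> real" where
  "discounted \<beta> P = (\<Sum>t. \<beta> ^ t * of_bool (P t))"

lemma summable_discounted:
  fixes \<beta> :: real
  assumes "0 \<le> \<beta>" "\<beta> < 1"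
  shows "summable (\<lambda>t. \<beta> ^ t * of_bool (P t))"
  by (rule summable_comparison_test'[of "\<lambda>t. \<beta> ^ t"]) (use assms in auto)

lemma one_minus_epow_eq_discounted:
  fixes \<beta> :: real
  assumes "0 \<le> \<beta>" "\<beta> < 1"
  shows "1 - epow \<beta> x = (1 - \<beta>) * discounted \<beta> (\<lambda>t. enat t < x)"
proof (cases x)
  case (enat k)
  have "discounted \<beta> (\<lambda>t. enat t < x) = (\<Sum>t<k. \<beta> ^ t)"
    unfolding discounted_def by (subst suminf_finite[of "{..<k}"]) (auto simp: enat)
  then show ?thesis
    using assms by (simp add: enat epow_def sum_gp_strict)
next
  case infinity
  then show ?thesis
    using assms by (simp add: discounted_def epow_def suminf_geometric)
qed

text \<open>Summation by parts writes the difference of the discounted counts as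
  \<open>(1 - \<beta>) \<Sum>\<^sub>t \<beta>\<^sup>t (hits Q (t + 1) - hits P (t + 1))\<close>, a sum of nonnegative terms.\<close>
lemma discounted_gap:
  fixes \<beta> :: real
  assumes "0 \<le> \<beta>" "\<beta> < 1" and le: "\<And>t. hits P t \<le> hits Q t"
  shows "(1 - \<beta>) * \<beta> ^ t * (real (hits Q (Suc t)) - real (hits P (Suc t)))
           \<le> discounted \<beta> Q - discounted \<beta> P"
proof -
  define S where "S t = real (hits Q t) - real (hits P t)" for t
  define D where "D t = of_bool (Q t) - (of_bool (P t) :: real)" for t
  have S_nonneg: "0 \<le> S t" for t
    using le[of t] by (simp add: S_def)
  have S_sum: "S t = (\<Sum>u<t. D u)" for t
    by (induction t) (auto simp: S_def D_def)
  have "(\<lambda>t. \<beta> ^ t * D t) sums (discounted \<beta> Q - discounted \<beta> P)"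
    unfolding discounted_def D_def right_diff_distrib
    by (intro sums_diff summable_sums summable_discounted assms)
  then have "(\<lambda>n. \<Sum>t<n. \<beta> ^ t * D t) \<longlonglongrightarrow> discounted \<beta> Q - discounted \<beta> P"
    by (simp add: sums_def)
  moreover have "(1 - \<beta>) * \<beta> ^ t * S (Suc t) \<le> (\<Sum>u<n. \<beta> ^ u * D u)" if "t < n" for n
  proof -
    have parts: "(\<Sum>u<n. \<beta> ^ u * D u) = \<beta> ^ n * S n + (1 - \<beta>) * (\<Sum>u<n. \<beta> ^ u * S (Suc u))" for n
      by (induction n) (auto simp: S_sum algebra_simps)
    have "\<beta> ^ t * S (Suc t) \<le> (\<Sum>u<n. \<beta> ^ u * S (Suc u))"
      using that assms S_nonneg by (intro member_le_sum) auto
    then have "(1 - \<beta>) * (\<beta> ^ t * S (Suc t)) \<le> (1 - \<beta>) * (\<Sum>u<n. \<beta> ^ u * S (Suc u))"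
      using assms by (intro mult_left_mono) auto
    moreover have "0 \<le> \<beta> ^ n * S n"
      using assms S_nonneg by simp
    ultimately show ?thesis
      unfolding parts by (simp add: mult.assoc)
  qed
  ultimately show ?thesis
    unfolding S_def[symmetric] by (intro LIMSEQ_le_const) (auto intro: exI[of _ "Suc t"])
qed

lemma discounted_mono:
  fixes \<beta> :: real
  assumes "0 \<le> \<beta>" "\<beta> < 1" and "\<And>t. hits P t \<le> hits Q t"
  shows "discounted \<beta> P \<le> discounted \<beta> Q"
proof -
  have "0 \<le> (1 - \<beta>) * \<beta> ^ 0 * (real (hits Q 1) - real (hits P 1))"
    using assms(2) assms(3)[of 1] by simp
  then show ?thesis
    using discounted_gap[OF assms, of 0] by simp
qed

text \<open>The layer-cake formula \<open>x = \<integral>\<^sub>0\<^sup>\<infinity> [m < x] dm\<close>, summed with discount weights.\<close>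
lemma discounted_levels_integral:
  fixes \<beta> :: real and x :: "nat \<Rightarrow> real"
  assumes "0 \<le> \<beta>" "\<beta> < 1" and x_nonneg: "\<And>t. 0 \<le> x t" and sx: "summable (\<lambda>t. \<beta> ^ t * x t)"
  shows "set_integrable lborel {0..} (\<lambda>m. discounted \<beta> (\<lambda>t. m < x t))"
    and "(LBINT m:{0..}. discounted \<beta> (\<lambda>t. m < x t)) = (\<Sum>t. \<beta> ^ t * x t)"
proof -
  define \<phi> where "\<phi> t = (\<lambda>m::real. \<beta> ^ t * indicator {0..<x t} m)" for t
  have layers: "indicator {0..} m * discounted \<beta> (\<lambda>t. m < x t) = (\<Sum>t. \<phi> t m)" for m
    by (cases "0 \<le> m") (auto simp: discounted_def \<phi>_def indicator_def of_bool_def)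
  have int_\<phi>: "integrable lborel (\<phi> t)" for t
    unfolding \<phi>_def using x_nonneg[of t]
    by (intro integrable_mult_right integrable_real_indicator) auto
  have integral_\<phi>: "integral\<^sup>L lborel (\<phi> t) = \<beta> ^ t * x t" for t
    unfolding \<phi>_def using x_nonneg[of t] by simp
  have norm_\<phi>: "norm (\<phi> t m) = \<phi> t m" for t m
    using assms by (simp add: \<phi>_def)
  have pointwise: "AE m in lborel. summable (\<lambda>t. norm (\<phi> t m))"
    by (intro AE_I2 summable_comparison_test'[OF summable_discounted[OF assms(1,2), of "\<lambda>_. True"]])
      (use assms in \<open>auto simp: \<phi>_def indicator_def\<close>)
  have total: "summable (\<lambda>t. \<integral>m. norm (\<phi> t m) \<partial>lborel)"
    unfolding norm_\<phi> integral_\<phi> by (rule sx)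
  show "set_integrable lborel {0..} (\<lambda>m. discounted \<beta> (\<lambda>t. m < x t))"
    unfolding set_integrable_def using integrable_suminf[OF int_\<phi> pointwise total]
    by (simp add: layers)
  show "(LBINT m:{0..}. discounted \<beta> (\<lambda>t. m < x t)) = (\<Sum>t. \<beta> ^ t * x t)"
    unfolding set_lebesgue_integral_def
    using integral_suminf[OF int_\<phi> pointwise total] by (simp add: layers integral_\<phi>)
qed

lemma nonpos_from_rationals_above:
  fixes f :: "real \<Rightarrow> real"
  assumes cont: "continuous_on {0..} f" and "0 \<le> x"
    and rat: "\<And>q. q \<in> \<rat> \<Longrightarrow> x < q \<Longrightarrow> f q \<le> 0"
  shows "f x \<le> 0"
proof -
  obtain r where r: "\<And>n. r n \<in> \<rat> \<and> x < r n \<and> r n < x + 1 / real (Suc n)"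
    using Rats_dense_in_real[of x "x + 1 / real (Suc _)"] by (metis add.right_neutral
        add_strict_left_mono of_nat_0_less_iff zero_less_Suc zero_less_divide_1_iff)
  have upper: "(\<lambda>n. x + 1 / real (Suc n)) \<longlonglongrightarrow> x"
    using LIMSEQ_inverse_real_of_nat_add[of x] by (simp add: inverse_eq_divide)
  have "r \<longlonglongrightarrow> x"
    by (rule real_tendsto_sandwich[OF _ _ tendsto_const upper])
      (use r in \<open>auto intro!: always_eventually less_imp_le\<close>)
  moreover have "\<forall>\<^sub>F n in sequentially. r n \<in> {0..}"
    using r \<open>0 \<le> x\<close> by (auto intro!: always_eventually intro: less_imp_le order_trans)
  ultimately have "(\<lambda>n. f (r n)) \<longlonglongrightarrow> f x"
    using continuous_on_tendsto_compose[OF cont, of r x] \<open>0 \<le> x\<close> by (simp add: o_def)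
  then show ?thesis
    by (rule tendsto_upperbound) (use r rat in auto)
qed

lemma hits_level_eventually_const:
  fixes y :: "nat \<Rightarrow> real" and c m\<^sub>0 :: real
  assumes "0 \<le> c"
  shows "\<forall>\<^sub>F m in at_right m\<^sub>0. hits (\<lambda>u. c * m < y u) t = hits (\<lambda>u. c * m\<^sub>0 < y u) t"
proof -
  have "\<forall>\<^sub>F m in at_right m\<^sub>0. c * m < y u \<longleftrightarrow> c * m\<^sub>0 < y u" for u
  proof (cases "c * m\<^sub>0 < y u")
    case True
    have "((\<lambda>m. c * m) \<longlongrightarrow> c * m\<^sub>0) (at_right m\<^sub>0)"
      by (intro tendsto_intros tendsto_ident_at)
    from order_tendstoD(2)[OF this True] show ?thesis
      by eventually_elim (use True in simp)
  next
    case False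
    have "\<forall>\<^sub>F m in at_right m\<^sub>0. m\<^sub>0 < m"
      by (simp add: eventually_at_right_less)
    then show ?thesis
    proof eventually_elim
      case (elim m)
      then have "c * m\<^sub>0 \<le> c * m"
        using assms by (intro mult_left_mono) auto
      then show ?case
        using False by auto
    qed
  qed
  then have "\<forall>\<^sub>F m in at_right m\<^sub>0. \<forall>u\<in>{..<t}. c * m < y u \<longleftrightarrow> c * m\<^sub>0 < y u"
    by (intro eventually_ball_finite) auto
  then show ?thesis
    by eventually_elim (simp add: hits_def)
qed

lemma set_integral_less_by_gap:
  fixes f g :: "real \<Rightarrow> real"
  assumes f: "set_integrable lborel {0..} f" and g: "set_integrable lborel {0..} g"
    and le: "\<And>m. 0 \<le> m \<Longrightarrow> f m \<le> g m"
    and "0 \<le> m\<^sub>0" "m\<^sub>0 < b" "0 < \<eta>" and gap: "\<And>m. m\<^sub>0 < m \<Longrightarrow> m < b \<Longrightarrow> f m + \<eta> \<le> g m"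
  shows "(LBINT m:{0..}. f m) < (LBINT m:{0..}. g m)"
proof -
  have ind: "set_integrable lborel {0..} (\<lambda>m. \<eta> * indicator {m\<^sub>0<..<b} m)"
    unfolding set_integrable_def
    using assms(5) by (intro integrable_mult_indicator integrable_mult_right integrable_real_indicator) auto
  have "\<eta> * indicator {m\<^sub>0<..<b} m \<le> g m - f m" if "m \<in> {0..}" for m
    using that le[of m] gap[of m] by (auto simp: indicator_def)
  then have "(LBINT m:{0..}. \<eta> * indicator {m\<^sub>0<..<b} m) \<le> (LBINT m:{0..}. g m - f m)"
    by (intro set_integral_mono ind set_integral_diff(1) f g)
  also have "\<dots> = (LBINT m:{0..}. g m) - (LBINT m:{0..}. f m)"
    by (rule set_integral_diff(2)[OF g f])
  finally have "(LBINT m:{0..}. \<eta> * indicator {m\<^sub>0<..<b} m) \<le> (LBINT m:{0..}. g m) - (LBINT m:{0..}. f m)" .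
  moreover have "(LBINT m:{0..}. \<eta> * indicator {m\<^sub>0<..<b} m) = \<eta> * (b - m\<^sub>0)"
  proof -
    have "(\<lambda>m. indicator {0..} m *\<^sub>R (\<eta> * indicator {m\<^sub>0<..<b} m)) = (\<lambda>m. \<eta> * indicator {m\<^sub>0<..<b} m)"
      using assms(4) by (auto simp: indicator_def fun_eq_iff)
    then show ?thesis
      unfolding set_lebesgue_integral_def using assms(5) by simp
  qed
  moreover have "0 < \<eta> * (b - m\<^sub>0)"
    using assms(5,6) by simp
  ultimately show ?thesis
    by linarith
qed

lemma hits_lead:
  assumes "P \<noteq> Q" and le: "\<And>t. hits P t \<le> hits Q t"
  obtains t where "hits P (Suc t) < hits Q (Suc t)"
proof -
  obtain t where "hits P t \<noteq> hits Q t"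
    using assms(1) hits_eq_imp_eq by blast
  moreover have "t \<noteq> 0"
    using calculation by (metis hits_0)
  ultimately show ?thesis
    using that le[of t] by (metis le_neq_implies_less not0_implies_Suc)
qed

lemma discounted_lead:
  fixes \<beta> :: real
  assumes "0 \<le> \<beta>" "\<beta> < 1" and le: "\<And>t. hits P t \<le> hits Q t" and lead: "hits P (Suc t) < hits Q (Suc t)"
  shows "discounted \<beta> P + (1 - \<beta>) * \<beta> ^ t \<le> discounted \<beta> Q"
proof -
  define D where "D = real (hits Q (Suc t)) - real (hits P (Suc t))"
  have "1 \<le> D"
    using lead unfolding D_def by (simp del: hits_Suc)
  then have "(1 - \<beta>) * \<beta> ^ t * 1 \<le> (1 - \<beta>) * \<beta> ^ t * D"
    using assms(1,2) by (intro mult_left_mono) auto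
  also have "\<dots> \<le> discounted \<beta> Q - discounted \<beta> P"
    unfolding D_def using assms(1,2) le by (rule discounted_gap)
  finally show ?thesis
    by simp
qed

text \<open>A difference between the level sets at \<open>m\<^sub>0\<close> persists on an interval of levels to the right of
  \<open>m\<^sub>0\<close>, because hit counts of level sets are right-continuous in \<open>m\<close>.\<close>
lemma discounted_levels_integral_less:
  fixes \<beta> c m\<^sub>0 :: real and y z :: "nat \<Rightarrow> real"
  defines "P \<equiv> \<lambda>m u. c * m < y u" and "Q \<equiv> \<lambda>m u. c * m < z u"
  assumes "0 < \<beta>" "\<beta> < 1" "0 \<le> c" "0 \<le> m\<^sub>0"
    and int_P: "set_integrable lborel {0..} (\<lambda>m. discounted \<beta> (P m))"
    and int_Q: "set_integrable lborel {0..} (\<lambda>m. discounted \<beta> (Q m))"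
    and le: "\<And>m t. hits (P m) t \<le> hits (Q m) t" and differ: "P m\<^sub>0 \<noteq> Q m\<^sub>0"
  shows "(LBINT m:{0..}. discounted \<beta> (P m)) < (LBINT m:{0..}. discounted \<beta> (Q m))"
proof -
  obtain t where lead: "hits (P m\<^sub>0) (Suc t) < hits (Q m\<^sub>0) (Suc t)"
    using hits_lead[OF differ le] .
  have "\<forall>\<^sub>F m in at_right m\<^sub>0. hits (P m) (Suc t) = hits (P m\<^sub>0) (Suc t) \<and> hits (Q m) (Suc t) = hits (Q m\<^sub>0) (Suc t)"
    unfolding P_def Q_def using \<open>0 \<le> c\<close> by (intro eventually_conj hits_level_eventually_const)
  then obtain b where "m\<^sub>0 < b" and const: "\<And>m. m\<^sub>0 < m \<Longrightarrow> m < b \<Longrightarrow>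
      hits (P m) (Suc t) = hits (P m\<^sub>0) (Suc t) \<and> hits (Q m) (Suc t) = hits (Q m\<^sub>0) (Suc t)"
    unfolding eventually_at_right_field by blast
  have gap: "discounted \<beta> (P m) + (1 - \<beta>) * \<beta> ^ t \<le> discounted \<beta> (Q m)" if "m\<^sub>0 < m" "m < b" for m
    using lead const[OF that] assms(3,4) by (intro discounted_lead le) (simp_all del: hits_Suc)
  show ?thesis
    by (rule set_integral_less_by_gap[OF int_P int_Q _ \<open>0 \<le> m\<^sub>0\<close> \<open>m\<^sub>0 < b\<close> _ gap])
      (use assms(3,4) le in \<open>auto intro: discounted_mono\<close>)
qed

lemma stopped_geometric_sums:
  fixes \<beta> :: real
  assumes "0 \<le> \<beta>" "\<beta> < 1" and "enat \<theta> \<le> e"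
  shows "(\<lambda>u. if \<theta> \<le> u \<and> enat u < e then \<beta> ^ (u - \<theta>) else 0) sums ((1 - epow \<beta> (e - enat \<theta>)) / (1 - \<beta>))"
proof -
  let ?w = "\<lambda>u. if \<theta> \<le> u \<and> enat u < e then \<beta> ^ (u - \<theta>) else 0"
  have shift: "(\<lambda>k. ?w (k + \<theta>)) = (\<lambda>k. \<beta> ^ k * of_bool (enat k < e - enat \<theta>))"
    using assms(3) by (cases e) (auto simp: fun_eq_iff less_diff_conv)
  have "(\<lambda>k. ?w (k + \<theta>)) sums ((1 - epow \<beta> (e - enat \<theta>)) / (1 - \<beta>))"
    unfolding shift using summable_sums[OF summable_discounted[OF assms(1,2)]] assms
    by (simp add: one_minus_epow_eq_discounted discounted_def)
  then have "?w sums ((1 - epow \<beta> (e - enat \<theta>)) / (1 - \<beta>) + (\<Sum>u<\<theta>. ?w u))"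
    using sums_iff_shift[of ?w \<theta>] by blast
  then show ?thesis
    by simp
qed

lemma (in complete_measure) borel_measurable_AE_cong:
  fixes f g :: "'a \<Rightarrow> real"
  assumes f: "f \<in> borel_measurable M" and ae: "AE x in M. f x = g x"
  shows "g \<in> borel_measurable M"
proof (rule measurableI)
  fix A :: "real set"
  assume A: "A \<in> sets borel"
  have "AE x in M. x \<in> f -` A \<inter> space M \<longleftrightarrow> x \<in> g -` A \<inter> space M"
    using ae by eventually_elim auto
  then show "g -` A \<inter> space M \<in> sets M"
    by (rule in_sets_AE) (use measurable_sets[OF f A] in auto)
qed simp

lemma (in sigma_finite_subalgebra) AE_eq_if_real_cond_exp_eq:
  fixes X Y :: "'a \<Rightarrow> real"
  assumes X: "integrable M X" and Y: "integrable M Y" and le: "AE x in M. X x \<le> Y x"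
    and eq: "AE x in M. real_cond_exp M F X x = real_cond_exp M F Y x"
  shows "AE x in M. X x = Y x"
proof -
  have "integral\<^sup>L M X = integral\<^sup>L M Y"
    using integral_cong_AE[OF borel_measurable_cond_exp2 borel_measurable_cond_exp2 eq]
    by (simp add: real_cond_exp_int(2)[OF X] real_cond_exp_int(2)[OF Y])
  then have "integral\<^sup>L M (\<lambda>x. Y x - X x) = 0"
    using X Y by simp
  moreover have "AE x in M. 0 \<le> Y x - X x"
    using le by eventually_elim simp
  ultimately have "AE x in M. Y x - X x = 0"
    using integral_nonneg_eq_0_iff_AE[OF Bochner_Integration.integrable_diff[OF Y X]] by simp
  then show ?thesis
    by eventually_elim simp
qed

section \<open>Allocation paths and the greedy path\<close>

definition alloc_path :: "('i \<Rightarrow> nat) \<Rightarrow> (nat \<Rightarrow> 'i \<Rightarrow> nat) \<Rightarrow> bool" where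
  "alloc_path s p \<longleftrightarrow> p 0 = s \<and> (\<forall>t. \<exists>j. p (Suc t) = (\<lambda>k. p t k + unitv j k))"

definition played :: "(nat \<Rightarrow> 'i \<Rightarrow> nat) \<Rightarrow> nat \<Rightarrow> 'i" where
  "played p t = (SOME j. p (Suc t) = (\<lambda>k. p t k + unitv j k))"

definition collected :: "('i \<Rightarrow> nat \<Rightarrow> real) \<Rightarrow> (nat \<Rightarrow> 'i \<Rightarrow> nat) \<Rightarrow> nat \<Rightarrow> real" where
  "collected a p t = a (played p t) (p (Suc t) (played p t))"

definition path_reward :: "real \<Rightarrow> ('i::finite \<Rightarrow> nat \<Rightarrow> real) \<Rightarrow> (nat \<Rightarrow> 'i \<Rightarrow> nat) \<Rightarrow> real" where
  "path_reward \<beta> a p = (\<Sum>i\<in>UNIV. \<Sum>t. \<beta> ^ t * a i (p (Suc t) i) * real (p (Suc t) i - p t i))"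

lemma add_unitv_inj: "(\<lambda>k. x k + unitv j k) = (\<lambda>k. x k + unitv j' k) \<Longrightarrow> j = j'"
  by (drule fun_cong[of _ _ j]) (auto simp: unitv_def split: if_splits)

lemma alloc_path_step: "alloc_path s p \<Longrightarrow> p (Suc t) = (\<lambda>k. p t k + unitv (played p t) k)"
  unfolding played_def alloc_path_def by (rule someI_ex) auto

lemma alloc_path_played: "alloc_path s p \<Longrightarrow> p (Suc t) (played p t) = Suc (p t (played p t))"
  by (drule alloc_path_step[of _ _ t]) (simp add: fun_eq_iff unitv_def)

lemma alloc_path_other: "alloc_path s p \<Longrightarrow> k \<noteq> played p t \<Longrightarrow> p (Suc t) k = p t k"
  by (drule alloc_path_step[of _ _ t]) (simp add: fun_eq_iff unitv_def)

lemma alloc_path_mono: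
  assumes p: "alloc_path s p" and "t \<le> t'"
  shows "p t k \<le> p t' k"
  using assms(2)
proof (induction rule: dec_induct)
  case (step n)
  then show ?case
    using alloc_path_played[OF p, of n] alloc_path_other[OF p, of k n] by (cases "k = played p n") auto
qed simp

lemma alloc_path_start_le: "alloc_path s p \<Longrightarrow> s k \<le> p t k"
  using alloc_path_mono[of s p 0 t k] by (simp add: alloc_path_def)

definition greedy_arm :: "('i \<Rightarrow> nat \<Rightarrow> real) \<Rightarrow> ('i \<Rightarrow> nat) \<Rightarrow> 'i" where
  "greedy_arm a r = (SOME j. \<forall>k. a k (Suc (r k)) \<le> a j (Suc (r j)))"

primrec greedy_path :: "('i \<Rightarrow> nat \<Rightarrow> real) \<Rightarrow> ('i \<Rightarrow> nat) \<Rightarrow> nat \<Rightarrow> 'i \<Rightarrow> nat" where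
  "greedy_path a s 0 = s"
| "greedy_path a s (Suc t) = (\<lambda>k. greedy_path a s t k + unitv (greedy_arm a (greedy_path a s t)) k)"

lemma greedy_arm_max:
  fixes a :: "'i::finite \<Rightarrow> nat \<Rightarrow> real"
  shows "a k (Suc (r k)) \<le> a (greedy_arm a r) (Suc (r (greedy_arm a r)))"
proof -
  let ?f = "\<lambda>k. a k (Suc (r k))"
  have fin: "finite (range ?f)"
    by simp
  obtain j where j: "Max (range ?f) = ?f j"
    using Max_in[OF fin] by blast
  have "?f k \<le> ?f j" for k
    unfolding j[symmetric] by (rule Max_ge[OF fin]) simp
  then have "\<forall>k. ?f k \<le> ?f j"
    by blast
  then show ?thesis
    unfolding greedy_arm_def by (rule someI2) auto
qed

lemma alloc_path_greedy_path: "alloc_path s (greedy_path a s)"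
  unfolding alloc_path_def by auto

lemma played_greedy_path: "played (greedy_path a s) t = greedy_arm a (greedy_path a s t)"
proof -
  have "(\<lambda>k. greedy_path a s t k + unitv (played (greedy_path a s) t) k)
          = (\<lambda>k. greedy_path a s t k + unitv (greedy_arm a (greedy_path a s t)) k)"
    using alloc_path_step[OF alloc_path_greedy_path[of s a], of t] by simp
  then show ?thesis
    by (rule add_unitv_inj)
qed

lemma collected_greedy_path_max:
  fixes a :: "'i::finite \<Rightarrow> nat \<Rightarrow> real"
  shows "a k (Suc (greedy_path a s t k)) \<le> collected a (greedy_path a s) t"
  using greedy_arm_max[of a k "greedy_path a s t"]
  by (simp add: collected_def played_greedy_path unitv_def)

section \<open>Deteriorating arms with deterministic rewards\<close>

definition first_hit :: "(nat \<Rightarrow> bool) \<Rightarrow> nat \<Rightarrow> enat" where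
  "first_hit P t = (if \<exists>\<theta>\<ge>t. P \<theta> then enat (LEAST \<theta>. t \<le> \<theta> \<and> P \<theta>) else \<infinity>)"

lemma sigma_idx_eq_first_hit: "sigma_idx V i t m \<omega> = first_hit (\<lambda>\<theta>. V i \<theta> m \<omega> = m) t"
  by (simp add: sigma_idx_def first_hit_def)

lemma first_hit_ge_iff: "enat (t + j) \<le> first_hit P t \<longleftrightarrow> (\<forall>\<theta>. t \<le> \<theta> \<longrightarrow> \<theta> < t + j \<longrightarrow> \<not> P \<theta>)"
proof (cases "\<exists>\<theta>\<ge>t. P \<theta>")
  case True
  let ?L = "LEAST \<theta>. t \<le> \<theta> \<and> P \<theta>"
  have L: "t \<le> ?L" "P ?L"
    using True by (metis (mono_tags, lifting) LeastI_ex)+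
  have min: "\<And>\<theta>. t \<le> \<theta> \<Longrightarrow> P \<theta> \<Longrightarrow> ?L \<le> \<theta>"
    by (simp add: Least_le)
  have "t + j \<le> ?L \<longleftrightarrow> (\<forall>\<theta>. t \<le> \<theta> \<longrightarrow> \<theta> < t + j \<longrightarrow> \<not> P \<theta>)"
    using L min by (meson leD le_trans not_le)
  then show ?thesis
    using True by (simp add: first_hit_def)
qed (auto simp: first_hit_def)

lemma first_hit_ge: "enat t \<le> first_hit P t"
  using first_hit_ge_iff[of t 0 P] by simp

text \<open>For deterministic rewards \<open>a\<close>, \<open>pulls_before_retirement \<beta> a s m i\<close> is \<open>\<sigma>\<^sub>i(s\<^sub>i; m) - s\<^sub>i\<close> and
  \<open>total_pulls \<beta> a s m\<close> is \<open>\<tau>(m; s)\<close>, given that arm \<open>i\<close> is retired in state \<open>\<theta>\<close> exactly when its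
  next reward is at most \<open>(1 - \<beta>) m\<close> (lemma \<open>AE_retirement_rule\<close> below).\<close>
definition pulls_before_retirement :: "real \<Rightarrow> ('i \<Rightarrow> nat \<Rightarrow> real) \<Rightarrow> ('i \<Rightarrow> nat) \<Rightarrow> real \<Rightarrow> 'i \<Rightarrow> enat"
  where "pulls_before_retirement \<beta> a s m i =
    first_hit (\<lambda>\<theta>. a i (Suc \<theta>) \<le> (1 - \<beta>) * m) (s i) - enat (s i)"

definition total_pulls :: "real \<Rightarrow> ('i::finite \<Rightarrow> nat \<Rightarrow> real) \<Rightarrow> ('i \<Rightarrow> nat) \<Rightarrow> real \<Rightarrow> enat" where
  "total_pulls \<beta> a s m = (\<Sum>i\<in>UNIV. pulls_before_retirement \<beta> a s m i)"

definition retirement_integral :: "real \<Rightarrow> ('i::finite \<Rightarrow> nat \<Rightarrow> real) \<Rightarrow> ('i \<Rightarrow> nat) \<Rightarrow> real" where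
  "retirement_integral \<beta> a s = (LBINT m:{0..}. 1 - epow \<beta> (total_pulls \<beta> a s m))"

locale deteriorating_arms =
  fixes \<beta> :: real and a :: "'i::finite \<Rightarrow> nat \<Rightarrow> real" and B :: real
  assumes beta: "0 < \<beta>" "\<beta> < 1"
    and a_pos: "\<And>i n. 1 \<le> n \<Longrightarrow> 0 < a i n"
    and a_decr: "\<And>i n. 1 \<le> n \<Longrightarrow> a i (Suc n) \<le> a i n"
    and a_bdd: "\<And>i n. 1 \<le> n \<Longrightarrow> a i n \<le> B"
begin

lemma a_antimono:
  assumes "1 \<le> n" "n \<le> n'"
  shows "a i n' \<le> a i n"
  using assms(2)
proof (induction rule: dec_induct)
  case (step k)
  then show ?case
    using a_decr[of k i] assms(1) by linarith
qed simp

lemma pulls_ge_iff: "enat j \<le> pulls_before_retirement \<beta> a s m i \<longleftrightarrow> j = 0 \<or> (1 - \<beta>) * m < a i (s i + j)"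
proof -
  let ?P = "\<lambda>\<theta>. a i (Suc \<theta>) \<le> (1 - \<beta>) * m"
  have "enat j \<le> first_hit ?P (s i) - enat (s i) \<longleftrightarrow> enat (s i + j) \<le> first_hit ?P (s i)"
    using first_hit_ge[of "s i" ?P] by (cases "first_hit ?P (s i)") auto
  also have "\<dots> \<longleftrightarrow> (\<forall>\<theta>. s i \<le> \<theta> \<longrightarrow> \<theta> < s i + j \<longrightarrow> (1 - \<beta>) * m < a i (Suc \<theta>))"
    by (simp add: first_hit_ge_iff not_le)
  also have "\<dots> \<longleftrightarrow> j = 0 \<or> (1 - \<beta>) * m < a i (s i + j)"
  proof (cases j)
    case (Suc j')
    then show ?thesis
      using a_antimono[of "Suc _" "s i + j" i] by (auto intro: less_le_trans)
  qed simp
  finally show ?thesis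
    unfolding pulls_before_retirement_def .
qed

lemma collected_pos: "alloc_path s p \<Longrightarrow> 0 < collected a p t"
  unfolding collected_def by (simp add: alloc_path_played a_pos)

lemma collected_le: "alloc_path s p \<Longrightarrow> collected a p t \<le> B"
  unfolding collected_def by (simp add: alloc_path_played a_bdd)

lemma summable_collected: "alloc_path s p \<Longrightarrow> summable (\<lambda>t. \<beta> ^ t * collected a p t)"
  by (rule summable_comparison_test'[of "\<lambda>t. B * \<beta> ^ t"])
    (use beta collected_pos[of s p] collected_le[of s p] in \<open>auto simp: abs_mult mult.commute less_imp_le\<close>)

lemma path_reward_eq_suminf:
  assumes p: "alloc_path s p"
  shows "path_reward \<beta> a p = (\<Sum>t. \<beta> ^ t * collected a p t)"
proof -
  have summand: "\<beta> ^ t * a i (p (Suc t) i) * real (p (Suc t) i - p t i) =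
      (if i = played p t then \<beta> ^ t * collected a p t else 0)" for i t
    using alloc_path_played[OF p, of t] alloc_path_other[OF p, of i t] by (auto simp: collected_def)
  have "summable (\<lambda>t. if i = played p t then \<beta> ^ t * collected a p t else 0)" for i
    by (rule summable_comparison_test'[OF summable_collected[OF p]])
      (use beta collected_pos[OF p] in \<open>auto simp: less_imp_le\<close>)
  then have "path_reward \<beta> a p = (\<Sum>t. \<Sum>i\<in>UNIV. if i = played p t then \<beta> ^ t * collected a p t else 0)"
    unfolding path_reward_def summand by (rule suminf_sum[symmetric])
  then show ?thesis
    by simp
qed

lemma path_reward_bounds:
  assumes p: "alloc_path s p"
  shows "0 \<le> path_reward \<beta> a p" "path_reward \<beta> a p \<le> B / (1 - \<beta>)"
proof -
  have bounds: "0 \<le> \<beta> ^ t * collected a p t" "\<beta> ^ t * collected a p t \<le> B * \<beta> ^ t" for t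
    using beta collected_pos[OF p, of t] collected_le[OF p, of t] by (auto simp: mult.commute)
  show "0 \<le> path_reward \<beta> a p"
    unfolding path_reward_eq_suminf[OF p] by (intro suminf_nonneg summable_collected[OF p] bounds)
  have "path_reward \<beta> a p \<le> (\<Sum>t. B * \<beta> ^ t)"
    unfolding path_reward_eq_suminf[OF p] using beta
    by (intro suminf_le summable_collected[OF p] bounds summable_mult summable_geometric) auto
  also have "\<dots> = B / (1 - \<beta>)"
    using beta by (simp add: suminf_mult suminf_geometric)
  finally show "path_reward \<beta> a p \<le> B / (1 - \<beta>)" .
qed

lemma synchronization_sum_eq_hits:
  assumes p: "alloc_path s p"
  shows "(\<Sum>i\<in>UNIV. min (enat (p t i - s i)) (pulls_before_retirement \<beta> a s m i))
           = enat (hits (\<lambda>u. (1 - \<beta>) * m < collected a p u) t)"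
proof (induction t)
  case 0
  then show ?case
    using p by (simp add: alloc_path_def zero_enat_def[symmetric])
next
  case (Suc t)
  let ?j = "played p t" and ?c = "pulls_before_retirement \<beta> a s m"
  have start: "s ?j \<le> p t ?j"
    by (rule alloc_path_start_le[OF p])
  let ?above = "(1 - \<beta>) * m < collected a p t"
  have "min (enat (p (Suc t) i - s i)) (?c i) = min (enat (p t i - s i)) (?c i)
          + (if i = ?j then (if ?above then 1 else 0) else 0)" for i
  proof (cases "i = ?j")
    case True
    have "p (Suc t) i - s i = Suc (p t i - s i)"
      using True alloc_path_played[OF p, of t] start by simp
    moreover have "enat (Suc (p t i - s i)) \<le> ?c i \<longleftrightarrow> ?above"
      unfolding pulls_ge_iff collected_def using True start alloc_path_played[OF p, of t] by simp
    ultimately show ?thesis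
      using True by (cases "?c i") (auto simp: one_enat_def)
  qed (simp add: alloc_path_other[OF p])
  then have "(\<Sum>i\<in>UNIV. min (enat (p (Suc t) i - s i)) (?c i))
               = (\<Sum>i\<in>UNIV. min (enat (p t i - s i)) (?c i)) + (if ?above then 1 else 0)"
    by (simp add: sum.distrib)
  then show ?case
    unfolding Suc by (cases ?above) (simp_all add: one_enat_def)
qed

lemma hits_collected_le_hits_total:
  assumes p: "alloc_path s p"
  shows "hits (\<lambda>u. (1 - \<beta>) * m < collected a p u) t \<le> hits (\<lambda>u. enat u < total_pulls \<beta> a s m) t"
proof -
  have "enat (hits (\<lambda>u. (1 - \<beta>) * m < collected a p u) t) \<le> total_pulls \<beta> a s m"
    unfolding synchronization_sum_eq_hits[OF p, symmetric] total_pulls_def by (intro sum_mono) simp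
  then have "enat (hits (\<lambda>u. (1 - \<beta>) * m < collected a p u) t) \<le> min (enat t) (total_pulls \<beta> a s m)"
    using hits_le by simp
  then show ?thesis
    unfolding hits_enat_less[symmetric] by simp
qed

lemma greedy_hits_eq:
  "hits (\<lambda>u. (1 - \<beta>) * m < collected a (greedy_path a s) u) t = hits (\<lambda>u. enat u < total_pulls \<beta> a s m) t"
  (is "hits ?P t = hits ?Q t")
proof (cases "\<forall>u<t. ?P u")
  case True
  then have "hits ?P t = t"
    by (simp add: hits_eq_iff)
  then show ?thesis
    using hits_collected_le_hits_total[OF alloc_path_greedy_path[of s a], of m t] hits_le[of ?Q t]
    by linarith
next
  case False
  let ?p = "greedy_path a s"
  obtain u where u: "u < t" "collected a ?p u \<le> (1 - \<beta>) * m"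
    using False by auto
  text \<open>Once the greedy path collects a reward below the level, every arm has already used up
    its pulls above the level.\<close>
  have "pulls_before_retirement \<beta> a s m k \<le> enat (?p t k - s k)" for k
  proof -
    have start: "s k \<le> ?p u k"
      by (rule alloc_path_start_le[OF alloc_path_greedy_path[of s a]])
    have "\<not> (1 - \<beta>) * m < a k (s k + Suc (?p u k - s k))"
      using collected_greedy_path_max[where a = a and k = k and s = s and t = u] u(2) start by (simp add: Suc_diff_le[symmetric])
    then have "\<not> enat (Suc (?p u k - s k)) \<le> pulls_before_retirement \<beta> a s m k"
      unfolding pulls_ge_iff by simp
    then have "pulls_before_retirement \<beta> a s m k \<le> enat (?p u k - s k)"
      by (simp add: not_le Suc_ile_eq)
    also have "\<dots> \<le> enat (?p t k - s k)"
      using alloc_path_mono[OF alloc_path_greedy_path[of s a], of u t k] u(1) by (simp add: diff_le_mono)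
    finally show ?thesis .
  qed
  then have "enat (hits ?P t) = total_pulls \<beta> a s m"
    unfolding synchronization_sum_eq_hits[OF alloc_path_greedy_path, symmetric] total_pulls_def
    by (simp add: min_absorb2)
  then have "enat (hits ?Q t) = enat (hits ?P t)"
    unfolding hits_enat_less using hits_le[of ?P t] by (metis enat_ord_simps(1) min_absorb2)
  then show ?thesis
    by simp
qed

lemma greedy_collected_gt_iff:
  "(1 - \<beta>) * m < collected a (greedy_path a s) t \<longleftrightarrow> enat t < total_pulls \<beta> a s m"
  by (rule hits_eq_imp_eq) (rule greedy_hits_eq)

lemma path_reward_levels_integral:
  assumes p: "alloc_path s p"
  shows "set_integrable lborel {0..} (\<lambda>m. discounted \<beta> (\<lambda>t. (1 - \<beta>) * m < collected a p t))"
    and "(LBINT m:{0..}. discounted \<beta> (\<lambda>t. (1 - \<beta>) * m < collected a p t)) = path_reward \<beta> a p / (1 - \<beta>)"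
proof -
  define x where "x t = collected a p t / (1 - \<beta>)" for t
  have level: "(1 - \<beta>) * m < collected a p t \<longleftrightarrow> m < x t" for m t
    using beta by (simp add: x_def pos_less_divide_eq mult.commute)
  have x_nonneg: "0 \<le> x t" for t
    using beta collected_pos[OF p, of t] by (simp add: x_def)
  have sums: "(\<Sum>t. \<beta> ^ t * x t) = path_reward \<beta> a p / (1 - \<beta>)"
    "summable (\<lambda>t. \<beta> ^ t * x t)"
    using suminf_divide[OF summable_collected[OF p], of "1 - \<beta>"]
      summable_divide[OF summable_collected[OF p], of "1 - \<beta>"]
    by (simp_all add: x_def path_reward_eq_suminf[OF p])
  note levels = discounted_levels_integral[OF less_imp_le[OF beta(1)] beta(2) x_nonneg sums(2)]
  show "set_integrable lborel {0..} (\<lambda>m. discounted \<beta> (\<lambda>t. (1 - \<beta>) * m < collected a p t))"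
    unfolding level by (rule levels(1))
  show "(LBINT m:{0..}. discounted \<beta> (\<lambda>t. (1 - \<beta>) * m < collected a p t)) = path_reward \<beta> a p / (1 - \<beta>)"
    unfolding level levels(2) sums(1) ..
qed

lemma retirement_integral_levels:
  "retirement_integral \<beta> a s
     = (1 - \<beta>) * (LBINT m:{0..}. discounted \<beta> (\<lambda>t. (1 - \<beta>) * m < collected a (greedy_path a s) t))"
proof -
  have "1 - epow \<beta> (total_pulls \<beta> a s m)
          = (1 - \<beta>) * discounted \<beta> (\<lambda>t. (1 - \<beta>) * m < collected a (greedy_path a s) t)" for m
    unfolding greedy_collected_gt_iff by (rule one_minus_epow_eq_discounted) (use beta in auto)
  then show ?thesis
    unfolding retirement_integral_def by (simp only: set_integral_mult_right)
qed

lemma retirement_integral_greedy: "retirement_integral \<beta> a s = path_reward \<beta> a (greedy_path a s)"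
  unfolding retirement_integral_levels path_reward_levels_integral(2)[OF alloc_path_greedy_path]
  using beta by simp

lemma path_reward_le_retirement_integral:
  assumes p: "alloc_path s p"
  shows "path_reward \<beta> a p \<le> retirement_integral \<beta> a s"
proof -
  have "discounted \<beta> (\<lambda>t. (1 - \<beta>) * m < collected a p t)
          \<le> discounted \<beta> (\<lambda>t. (1 - \<beta>) * m < collected a (greedy_path a s) t)" for m
    using beta greedy_hits_eq hits_collected_le_hits_total[OF p]
    by (intro discounted_mono) (auto simp: less_imp_le)
  then have "path_reward \<beta> a p / (1 - \<beta>) \<le> path_reward \<beta> a (greedy_path a s) / (1 - \<beta>)"
    unfolding path_reward_levels_integral(2)[OF p, symmetric]
      path_reward_levels_integral(2)[OF alloc_path_greedy_path, symmetric]
    by (intro set_integral_mono path_reward_levels_integral(1)[OF p]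
        path_reward_levels_integral(1)[OF alloc_path_greedy_path])
  then show ?thesis
    unfolding retirement_integral_greedy using beta by (simp add: divide_le_cancel)
qed

lemma total_pulls_le_iff:
  "total_pulls \<beta> a s m \<le> enat t \<longleftrightarrow> collected a (greedy_path a s) t / (1 - \<beta>) \<le> m"
proof -
  have "(1 - \<beta>) * m < collected a (greedy_path a s) t \<longleftrightarrow> m < collected a (greedy_path a s) t / (1 - \<beta>)"
    using beta by (simp add: pos_less_divide_eq mult.commute)
  then show ?thesis
    unfolding greedy_collected_gt_iff by (simp add: not_less[symmetric])
qed

lemma Inf_total_pulls_le:
  "Inf {m. 0 \<le> m \<and> total_pulls \<beta> a s m \<le> enat t} = collected a (greedy_path a s) t / (1 - \<beta>)"
proof -
  have "0 \<le> collected a (greedy_path a s) t / (1 - \<beta>)"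
    using beta collected_pos[OF alloc_path_greedy_path[of s a], of t] by simp
  then have "{m. 0 \<le> m \<and> total_pulls \<beta> a s m \<le> enat t} = {collected a (greedy_path a s) t / (1 - \<beta>)..}"
    unfolding total_pulls_le_iff by auto
  then show ?thesis
    by simp
qed

lemma retirement_integral_eq_suminf_Inf:
  "retirement_integral \<beta> a s = (1 - \<beta>) * (\<Sum>t. \<beta> ^ t * Inf {m. 0 \<le> m \<and> total_pulls \<beta> a s m \<le> enat t})"
proof -
  have "(\<Sum>t. \<beta> ^ t * Inf {m. 0 \<le> m \<and> total_pulls \<beta> a s m \<le> enat t})
          = (\<Sum>t. \<beta> ^ t * collected a (greedy_path a s) t) / (1 - \<beta>)"
    unfolding Inf_total_pulls_le using suminf_divide[OF summable_collected[OF alloc_path_greedy_path]]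
    by simp
  then show ?thesis
    unfolding retirement_integral_greedy path_reward_eq_suminf[OF alloc_path_greedy_path] using beta by simp
qed

lemma path_reward_eq_retirement_integral_iff:
  assumes p: "alloc_path s p"
  shows "path_reward \<beta> a p = retirement_integral \<beta> a s
    \<longleftrightarrow> (\<forall>m>0. \<forall>t. (1 - \<beta>) * m < collected a p t \<longleftrightarrow> enat t < total_pulls \<beta> a s m)"
proof -
  let ?g = "greedy_path a s"
  let ?P = "\<lambda>m t. (1 - \<beta>) * m < collected a p t" and ?Q = "\<lambda>m t. (1 - \<beta>) * m < collected a ?g t"
  note int_P = path_reward_levels_integral(1)[OF p]
    and int_Q = path_reward_levels_integral(1)[OF alloc_path_greedy_path]
  have "path_reward \<beta> a p = retirement_integral \<beta> a s
    \<longleftrightarrow> (LBINT m:{0..}. discounted \<beta> (?P m)) = (LBINT m:{0..}. discounted \<beta> (?Q m))"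
    unfolding retirement_integral_greedy path_reward_levels_integral(2)[OF p]
      path_reward_levels_integral(2)[OF alloc_path_greedy_path] using beta by simp
  also have "\<dots> \<longleftrightarrow> (\<forall>m>0. ?P m = ?Q m)"
  proof
    assume "\<forall>m>0. ?P m = ?Q m"
    moreover have "?P 0 = ?Q 0"
      using collected_pos[OF p] collected_pos[OF alloc_path_greedy_path] by simp
    ultimately have "?P m = ?Q m" if "m \<in> {0..}" for m
      using that by (cases "m = 0") auto
    then show "(LBINT m:{0..}. discounted \<beta> (?P m)) = (LBINT m:{0..}. discounted \<beta> (?Q m))"
      by (intro set_lebesgue_integral_cong) auto
  next
    assume integrals: "(LBINT m:{0..}. discounted \<beta> (?P m)) = (LBINT m:{0..}. discounted \<beta> (?Q m))"
    have "?P m\<^sub>0 = ?Q m\<^sub>0" if "0 < m\<^sub>0" for m\<^sub>0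
    proof (rule ccontr)
      assume "?P m\<^sub>0 \<noteq> ?Q m\<^sub>0"
      then have "(LBINT m:{0..}. discounted \<beta> (?P m)) < (LBINT m:{0..}. discounted \<beta> (?Q m))"
        using beta that hits_collected_le_hits_total[OF p] greedy_hits_eq
        by (intro discounted_levels_integral_less[OF _ _ _ _ int_P int_Q]) auto
      then show False
        using integrals by simp
    qed
    then show "\<forall>m>0. ?P m = ?Q m"
      by blast
  qed
  also have "\<dots> \<longleftrightarrow> (\<forall>m>0. \<forall>t. ?P m t \<longleftrightarrow> enat t < total_pulls \<beta> a s m)"
    by (simp add: fun_eq_iff greedy_collected_gt_iff)
  finally show ?thesis .
qed

lemma synchronization_iff:
  assumes p: "alloc_path s p"
  shows "(\<Sum>i\<in>UNIV. min (enat (p t i - s i)) (pulls_before_retirement \<beta> a s m i)) = min (enat t) (total_pulls \<beta> a s m)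
    \<longleftrightarrow> hits (\<lambda>u. (1 - \<beta>) * m < collected a p u) t = hits (\<lambda>u. enat u < total_pulls \<beta> a s m) t"
proof -
  have "min (enat t) (total_pulls \<beta> a s m) = enat (hits (\<lambda>u. enat u < total_pulls \<beta> a s m) t)"
    by (rule hits_enat_less[symmetric])
  then show ?thesis
    by (simp add: synchronization_sum_eq_hits[OF p])
qed

lemma synchronized_iff:
  assumes p: "alloc_path s p"
  shows "(\<forall>t. \<forall>m>0. (\<Sum>i\<in>UNIV. min (enat (p t i - s i)) (pulls_before_retirement \<beta> a s m i))
                      = min (enat t) (total_pulls \<beta> a s m))
    \<longleftrightarrow> (\<forall>m>0. \<forall>t. (1 - \<beta>) * m < collected a p t \<longleftrightarrow> enat t < total_pulls \<beta> a s m)"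
proof -
  have "(\<forall>t. hits (\<lambda>u. (1 - \<beta>) * m < collected a p u) t = hits (\<lambda>u. enat u < total_pulls \<beta> a s m) t)
    \<longleftrightarrow> (\<forall>t. (1 - \<beta>) * m < collected a p t \<longleftrightarrow> enat t < total_pulls \<beta> a s m)" for m
  proof
    assume "\<forall>t. (1 - \<beta>) * m < collected a p t \<longleftrightarrow> enat t < total_pulls \<beta> a s m"
    then have "(\<lambda>u. (1 - \<beta>) * m < collected a p u) = (\<lambda>u. enat u < total_pulls \<beta> a s m)"
      by blast
    then show "\<forall>t. hits (\<lambda>u. (1 - \<beta>) * m < collected a p u) t = hits (\<lambda>u. enat u < total_pulls \<beta> a s m) t"
      by simp
  qed (use hits_eq_imp_eq in blast)
  then show ?thesis
    unfolding synchronization_iff[OF p] by blast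
qed

lemma stopped_sum_bounds:
  fixes i :: 'i
  assumes "enat \<theta> \<le> e"
  defines "S \<equiv> (\<Sum>u. if \<theta> \<le> u \<and> enat u < e then \<beta> ^ (u - \<theta>) * a i (u + 1) else 0)"
  shows "0 \<le> S"
    and "(\<And>u. \<theta> \<le> u \<Longrightarrow> a i (u + 1) \<le> c) \<Longrightarrow> S \<le> (1 - epow \<beta> (e - enat \<theta>)) / (1 - \<beta>) * c"
proof -
  define w where "w u = (if \<theta> \<le> u \<and> enat u < e then \<beta> ^ (u - \<theta>) else 0)" for u
  have weighted: "(\<lambda>u. w u * c) sums ((1 - epow \<beta> (e - enat \<theta>)) / (1 - \<beta>) * c)" for c
    unfolding w_def by (intro sums_mult2 stopped_geometric_sums assms less_imp_le[OF beta(1)] beta(2))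
  have w_nonneg: "0 \<le> w u" for u
    using beta by (simp add: w_def)
  have a_bounds: "0 < a i (u + 1)" "a i (u + 1) \<le> B" for u
    using a_pos a_bdd by auto
  have S: "S = (\<Sum>u. w u * a i (u + 1))"
    unfolding S_def w_def by (simp add: if_distrib[of "\<lambda>x. x * _"] cong: if_cong)
  have summable: "summable (\<lambda>u. w u * a i (u + 1))"
    by (rule summable_comparison_test'[OF sums_summable[OF weighted[of B]]])
      (use w_nonneg a_bounds in \<open>auto simp: abs_mult abs_of_pos intro: mult_left_mono\<close>)
  show "0 \<le> S"
    unfolding S using w_nonneg a_bounds by (intro suminf_nonneg summable) (simp add: less_imp_le)
  assume c: "\<And>u. \<theta> \<le> u \<Longrightarrow> a i (u + 1) \<le> c"
  have "w u * a i (u + 1) \<le> w u * c" for u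
    using c[of u] w_nonneg[of u] by (cases "\<theta> \<le> u") (auto simp: w_def intro: mult_left_mono)
  then have "S \<le> (\<Sum>u. w u * c)"
    unfolding S by (intro suminf_le summable sums_summable[OF weighted])
  then show "S \<le> (1 - epow \<beta> (e - enat \<theta>)) / (1 - \<beta>) * c"
    using sums_unique[OF weighted[of c]] by simp
qed

lemma stopped_reward_bounds:
  fixes i :: 'i
  assumes "enat \<theta> \<le> e" "0 \<le> m"
  defines "P \<equiv> (\<Sum>u. if \<theta> \<le> u \<and> enat u < e then \<beta> ^ (u - \<theta>) * a i (u + 1) else 0)
                + m * epow \<beta> (e - enat \<theta>)"
  shows "0 \<le> P" "P \<le> B / (1 - \<beta>) + m" "a i (Suc \<theta>) \<le> (1 - \<beta>) * m \<Longrightarrow> P \<le> m"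
proof -
  define q where "q = epow \<beta> (e - enat \<theta>)"
  note S = stopped_sum_bounds[OF assms(1), of i, folded q_def]
  have q: "0 \<le> q" "q \<le> 1"
    using beta by (cases "e - enat \<theta>"; simp add: q_def epow_def power_le_one)+
  show "0 \<le> P"
    unfolding P_def q_def[symmetric] using S(1) q \<open>0 \<le> m\<close> by simp
  have "B \<ge> 0"
    using a_pos[of 1 i] a_bdd[of 1 i] by simp
  then have "(1 - q) / (1 - \<beta>) * B \<le> B / (1 - \<beta>)"
    using q beta by (simp add: divide_le_cancel mult_left_le_one_le)
  moreover have "m * q \<le> m"
    using q \<open>0 \<le> m\<close> by (simp add: mult_left_le)
  ultimately show "P \<le> B / (1 - \<beta>) + m"
    unfolding P_def q_def[symmetric] using S(2)[of B] a_bdd by fastforce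
  assume "a i (Suc \<theta>) \<le> (1 - \<beta>) * m"
  then have "(\<Sum>u. if \<theta> \<le> u \<and> enat u < e then \<beta> ^ (u - \<theta>) * a i (u + 1) else 0) \<le> (1 - q) * m"
    using S(2)[of "(1 - \<beta>) * m"] a_antimono[of "Suc \<theta>" "Suc _" i] beta by force
  then show "P \<le> m"
    unfolding P_def q_def[symmetric] by (simp add: algebra_simps)
qed

end

section \<open>The deteriorating bandit\<close>

locale deteriorating_bandit =
  fixes M :: "'a measure"
    and F :: "('i::finite \<Rightarrow> nat) \<Rightarrow> 'a measure"
    and \<beta> :: real
    and h :: "'i \<Rightarrow> nat \<Rightarrow> 'a \<Rightarrow> real"
    and V :: "'i \<Rightarrow> nat \<Rightarrow> real \<Rightarrow> 'a \<Rightarrow> real"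
  assumes prob: "prob_space M"
    and compl: "complete_measure M"
    and beta: "0 < \<beta>" "\<beta> < 1"
    and subalg: "\<And>r. subalgebra M (F r)"
    and F1: "\<And>r q. r \<le> q \<Longrightarrow> sets (F r) \<subseteq> sets (F q)"
    and h_pos: "\<And>i t \<omega>. 1 \<le> t \<Longrightarrow> \<omega> \<in> space M \<Longrightarrow> 0 < h i t \<omega>"
    and h_decr: "\<And>i t \<omega>. 1 \<le> t \<Longrightarrow> \<omega> \<in> space M \<Longrightarrow> h i (Suc t) \<omega> \<le> h i t \<omega>"
    and h_bdd: "\<exists>B. \<forall>i t. \<forall>\<omega>\<in>space M. 1 \<le> t \<longrightarrow> h i t \<omega> \<le> B"
    and h_pred: "\<And>i t. 1 \<le> t \<Longrightarrow> h i t \<in> borel_measurable (F (tvec (t - 1) i))"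
    and V_ess: "\<And>i t m. 0 \<le> m \<Longrightarrow>
       is_ess_sup M {real_cond_exp M (F (tvec t i)) (payoff \<beta> h i t m \<tau>) | \<tau>. \<tau> \<in> stop_times M F i t}
         (V i t m)"
    and V_cont: "\<And>i t \<omega>. \<omega> \<in> space M \<Longrightarrow> continuous_on {0..} (\<lambda>m. V i t m \<omega>)"
begin

sublocale P: prob_space M
  by (rule prob)

abbreviation rewards_at :: "'a \<Rightarrow> 'i \<Rightarrow> nat \<Rightarrow> real" where
  "rewards_at \<omega> \<equiv> \<lambda>i n. h i n \<omega>"

lemma space_F [simp]: "space (F r) = space M"
  using subalg[of r] by (simp add: subalgebra_def)

lemma sets_F: "sets (F r) \<subseteq> sets M"
  using subalg[of r] by (simp add: subalgebra_def)

lemma sigma_finite_subalgebra_F: "sigma_finite_subalgebra M (F r)"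
  using subalg P.finite_measure_axioms
  by (intro finite_measure_subalgebra_is_sigma_finite)
    (simp add: finite_measure_subalgebra_def finite_measure_subalgebra_axioms_def)

lemma subalgebra_F: "r \<le> q \<Longrightarrow> subalgebra (F q) (F r)"
  unfolding subalgebra_def using F1 by auto

lemma h_measurable_F: "1 \<le> n \<Longrightarrow> tvec (n - 1) i \<le> r \<Longrightarrow> h i n \<in> borel_measurable (F r)"
  using measurable_from_subalg[OF subalgebra_F h_pred] by blast

lemma h_measurable [measurable]: "1 \<le> n \<Longrightarrow> h i n \<in> borel_measurable M"
  using measurable_from_subalg[OF subalg h_pred] by blast

lemma tvec_le: "tvec (r i) i \<le> r"
  unfolding tvec_def le_fun_def by auto

definition bound :: real where
  "bound = (SOME B. \<forall>i t. \<forall>\<omega>\<in>space M. 1 \<le> t \<longrightarrow> h i t \<omega> \<le> B)"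

lemma h_le_bound: "1 \<le> t \<Longrightarrow> \<omega> \<in> space M \<Longrightarrow> h i t \<omega> \<le> bound"
  using someI_ex[OF h_bdd] unfolding bound_def by blast

lemma bound_nonneg: "0 \<le> bound"
proof -
  obtain \<omega> where "\<omega> \<in> space M"
    using P.not_empty by blast
  then show ?thesis
    using h_pos[of 1 \<omega> undefined] h_le_bound[of 1 \<omega> undefined] by simp
qed

lemma deteriorating_arms_at: "\<omega> \<in> space M \<Longrightarrow> deteriorating_arms \<beta> (rewards_at \<omega>) bound"
  by unfold_locales (use beta h_pos h_decr h_le_bound in auto)

lemma stop_times_const:
  assumes "\<theta> \<le> n"
  shows "(\<lambda>_. enat n) \<in> stop_times M F i \<theta>"
proof -
  have "space M \<in> sets (F r)" for r
    using sets.top[of "F r"] by simp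
  then show ?thesis
    unfolding stop_times_def using assms by simp
qed

lemma payoff_now: "payoff \<beta> h i \<theta> m (\<lambda>_. enat \<theta>) \<omega> = m"
proof -
  have "(\<lambda>u. if \<theta> \<le> u \<and> enat u < enat \<theta> then \<beta> ^ (u - \<theta>) * h i (u + 1) \<omega> else 0) = (\<lambda>_. 0)"
    by auto
  then show ?thesis
    by (simp add: payoff_def epow_def)
qed

lemma payoff_next: "payoff \<beta> h i \<theta> m (\<lambda>_. enat (Suc \<theta>)) \<omega> = h i (Suc \<theta>) \<omega> + m * \<beta>"
proof -
  have "(\<lambda>u. if \<theta> \<le> u \<and> enat u < enat (Suc \<theta>) then \<beta> ^ (u - \<theta>) * h i (u + 1) \<omega> else 0)
          = (\<lambda>u. if u = \<theta> then h i (Suc \<theta>) \<omega> else 0)"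
    by (auto simp: fun_eq_iff)
  moreover have "(\<Sum>u. if u = \<theta> then h i (Suc \<theta>) \<omega> else 0) = h i (Suc \<theta>) \<omega>"
    using sums_unique[OF sums_single[of \<theta> "\<lambda>_. h i (Suc \<theta>) \<omega>"]] by simp
  ultimately show ?thesis
    by (simp add: payoff_def epow_def)
qed

lemma stop_time_measurable:
  assumes \<tau>: "\<tau> \<in> stop_times M F i \<theta>"
  shows "\<tau> \<in> measurable M (count_space UNIV)"
proof -
  have le: "{\<omega> \<in> space M. \<tau> \<omega> \<le> enat u} \<in> sets M" for u
    using \<tau> sets_F unfolding stop_times_def by blast
  have "\<tau> -` {e} \<inter> space M \<in> sets M" for e
  proof (cases e)
    case (enat n)
    have eq: "x = enat n \<longleftrightarrow> x \<le> enat n \<and> \<not> (\<exists>u<n. x \<le> enat u)" for x :: enat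
      by (cases x) (auto simp: le_less)
    have "\<tau> -` {e} \<inter> space M = {\<omega> \<in> space M. \<tau> \<omega> \<le> enat n} - (\<Union>u<n. {\<omega> \<in> space M. \<tau> \<omega> \<le> enat u})"
      unfolding enat set_eq_iff by (auto simp: eq[of "\<tau> _"])
    then show ?thesis
      using le by auto
  next
    case infinity
    have eq: "x = \<infinity> \<longleftrightarrow> \<not> (\<exists>u. x \<le> enat u)" for x :: enat
      by (cases x) auto
    have "\<tau> -` {e} \<inter> space M = space M - (\<Union>u. {\<omega> \<in> space M. \<tau> \<omega> \<le> enat u})"
      unfolding infinity set_eq_iff by (auto simp: eq[of "\<tau> _"])
    then show ?thesis
      using le by auto
  qed
  then show ?thesis
    by (simp add: measurable_count_space_eq2_countable)
qed

lemma payoff_measurable: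
  assumes \<tau>: "\<tau> \<in> stop_times M F i \<theta>"
  shows "payoff \<beta> h i \<theta> m \<tau> \<in> borel_measurable M"
proof -
  define \<Phi> where "\<Phi> e \<omega> = (\<Sum>u. if \<theta> \<le> u \<and> enat u < e then \<beta> ^ (u - \<theta>) * h i (u + 1) \<omega> else 0)
                             + m * epow \<beta> (e - enat \<theta>)" for e \<omega>
  have "(\<lambda>\<omega>. if \<theta> \<le> u \<and> enat u < e then \<beta> ^ (u - \<theta>) * h i (u + 1) \<omega> else 0) \<in> borel_measurable M" for u e
    using h_measurable[of "u + 1" i] by (cases "\<theta> \<le> u \<and> enat u < e") auto
  then have "\<Phi> e \<in> borel_measurable M" for e
    unfolding \<Phi>_def by (intro borel_measurable_add borel_measurable_suminf borel_measurable_const)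
  then have "(\<lambda>\<omega>. \<Phi> (\<tau> \<omega>) \<omega>) \<in> borel_measurable M"
    by (rule measurable_compose_countable[OF _ stop_time_measurable[OF \<tau>]])
  moreover have "payoff \<beta> h i \<theta> m \<tau> = (\<lambda>\<omega>. \<Phi> (\<tau> \<omega>) \<omega>)"
    unfolding payoff_def \<Phi>_def by (rule ext) (rule refl)
  ultimately show ?thesis
    by simp
qed

lemma payoff_bounds:
  assumes \<tau>: "\<tau> \<in> stop_times M F i \<theta>" and "0 \<le> m" and \<omega>: "\<omega> \<in> space M"
  shows "0 \<le> payoff \<beta> h i \<theta> m \<tau> \<omega>" "payoff \<beta> h i \<theta> m \<tau> \<omega> \<le> bound / (1 - \<beta>) + m"
    and "h i (Suc \<theta>) \<omega> \<le> (1 - \<beta>) * m \<Longrightarrow> payoff \<beta> h i \<theta> m \<tau> \<omega> \<le> m"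
proof -
  have "enat \<theta> \<le> \<tau> \<omega>"
    using \<tau> \<omega> unfolding stop_times_def by blast
  note bounds = deteriorating_arms.stopped_reward_bounds[OF deteriorating_arms_at[OF \<omega>] this \<open>0 \<le> m\<close>, of i]
  show "0 \<le> payoff \<beta> h i \<theta> m \<tau> \<omega>" "payoff \<beta> h i \<theta> m \<tau> \<omega> \<le> bound / (1 - \<beta>) + m"
    and "h i (Suc \<theta>) \<omega> \<le> (1 - \<beta>) * m \<Longrightarrow> payoff \<beta> h i \<theta> m \<tau> \<omega> \<le> m"
    using bounds by (simp_all add: payoff_def)
qed

lemma payoff_integrable:
  assumes "\<tau> \<in> stop_times M F i \<theta>" "0 \<le> m"
  shows "integrable M (payoff \<beta> h i \<theta> m \<tau>)"
  by (rule P.integrable_const_bound[where B = "bound / (1 - \<beta>) + m"])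
    (use payoff_bounds[OF assms] payoff_measurable[OF assms(1)] in auto)

lemma V_measurable [measurable]: "0 \<le> m \<Longrightarrow> V i t m \<in> borel_measurable M"
  using V_ess unfolding is_ess_sup_def by blast

lemma V_ge: "0 \<le> m \<Longrightarrow> \<tau> \<in> stop_times M F i t \<Longrightarrow>
    AE \<omega> in M. real_cond_exp M (F (tvec t i)) (payoff \<beta> h i t m \<tau>) \<omega> \<le> V i t m \<omega>"
  using V_ess unfolding is_ess_sup_def by blast

lemma V_least: "0 \<le> m \<Longrightarrow> Z \<in> borel_measurable M \<Longrightarrow>
    (\<And>\<tau>. \<tau> \<in> stop_times M F i t \<Longrightarrow> AE \<omega> in M. real_cond_exp M (F (tvec t i)) (payoff \<beta> h i t m \<tau>) \<omega> \<le> Z \<omega>)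
    \<Longrightarrow> AE \<omega> in M. V i t m \<omega> \<le> Z \<omega>"
  using V_ess[where i = i and t = t and m = m] unfolding is_ess_sup_def by blast

lemma V_ge_adapted_payoff:
  assumes "0 \<le> m" "\<tau> \<in> stop_times M F i \<theta>"
    and adapted: "payoff \<beta> h i \<theta> m \<tau> \<in> borel_measurable (F (tvec \<theta> i))"
  shows "AE \<omega> in M. payoff \<beta> h i \<theta> m \<tau> \<omega> \<le> V i \<theta> m \<omega>"
proof -
  interpret S: sigma_finite_subalgebra M "F (tvec \<theta> i)"
    by (rule sigma_finite_subalgebra_F)
  have "AE \<omega> in M. real_cond_exp M (F (tvec \<theta> i)) (payoff \<beta> h i \<theta> m \<tau>) \<omega> = payoff \<beta> h i \<theta> m \<tau> \<omega>"
    by (rule S.real_cond_exp_F_meas[OF payoff_integrable[OF assms(2,1)] adapted])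
  then show ?thesis
    using V_ge[OF assms(1,2)] by eventually_elim simp
qed

lemma retire_le_V: "0 \<le> m \<Longrightarrow> AE \<omega> in M. m \<le> V i \<theta> m \<omega>"
  using V_ge_adapted_payoff[OF _ stop_times_const[of \<theta> \<theta>]] by (simp add: payoff_now[abs_def])

lemma continue_le_V:
  assumes "0 \<le> m"
  shows "AE \<omega> in M. h i (Suc \<theta>) \<omega> + \<beta> * m \<le> V i \<theta> m \<omega>"
proof -
  have "AE \<omega> in M. payoff \<beta> h i \<theta> m (\<lambda>_. enat (Suc \<theta>)) \<omega> \<le> V i \<theta> m \<omega>"
    using h_pred[of "Suc \<theta>" i]
    by (intro V_ge_adapted_payoff[OF assms stop_times_const]) (simp_all add: payoff_next[abs_def])
  then show ?thesis
    by (simp add: payoff_next mult.commute)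
qed

text \<open>One-step look-ahead: since rewards deteriorate, on the \<open>F(\<theta> e\<^sub>i)\<close>-measurable event
  \<open>h\<^sub>i(\<theta>+1) \<le> (1-\<beta>) m\<close> no stopping rule earns more than retiring at once.\<close>
lemma V_le_retire: "0 \<le> m \<Longrightarrow> AE \<omega> in M. h i (Suc \<theta>) \<omega> \<le> (1 - \<beta>) * m \<longrightarrow> V i \<theta> m \<omega> \<le> m"
proof -
  assume m: "0 \<le> m"
  define G where "G = F (tvec \<theta> i)"
  interpret S: sigma_finite_subalgebra M G
    unfolding G_def by (rule sigma_finite_subalgebra_F)
  define E :: "'a \<Rightarrow> real" where "E \<omega> = of_bool (h i (Suc \<theta>) \<omega> \<le> (1 - \<beta>) * m)" for \<omega>
  have h_G [measurable]: "h i (Suc \<theta>) \<in> borel_measurable G"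
    unfolding G_def using h_pred[of "Suc \<theta>" i] by simp
  have E_G [measurable]: "E \<in> borel_measurable G" and E_M [measurable]: "E \<in> borel_measurable M"
    unfolding E_def by measurable
  define Z where "Z \<omega> = (if h i (Suc \<theta>) \<omega> \<le> (1 - \<beta>) * m then m else V i \<theta> m \<omega>)" for \<omega>
  have "AE \<omega> in M. real_cond_exp M G (payoff \<beta> h i \<theta> m \<tau>) \<omega> \<le> Z \<omega>"
    if \<tau>: "\<tau> \<in> stop_times M F i \<theta>" for \<tau>
  proof -
    let ?X = "payoff \<beta> h i \<theta> m \<tau>"
    have X_M [measurable]: "?X \<in> borel_measurable M"
      by (rule payoff_measurable[OF \<tau>])
    have int_EX: "integrable M (\<lambda>\<omega>. E \<omega> * ?X \<omega>)"
      by (rule P.integrable_const_bound[where B = "bound / (1 - \<beta>) + m"])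
        (use payoff_bounds[OF \<tau> m] bound_nonneg m beta in \<open>auto simp: E_def\<close>)
    have int_Em: "integrable M (\<lambda>\<omega>. E \<omega> * m)"
      by (rule P.integrable_const_bound[where B = m]) (use m in \<open>auto simp: E_def\<close>)
    have "AE \<omega> in M. real_cond_exp M G (\<lambda>\<omega>. E \<omega> * ?X \<omega>) \<omega> = E \<omega> * real_cond_exp M G ?X \<omega>"
      by (rule S.real_cond_exp_mult[OF E_G X_M int_EX])
    moreover have "AE \<omega> in M. real_cond_exp M G (\<lambda>\<omega>. E \<omega> * m) \<omega> = E \<omega> * m"
      by (rule S.real_cond_exp_F_meas[OF int_Em]) measurable
    moreover have "AE \<omega> in M. real_cond_exp M G (\<lambda>\<omega>. E \<omega> * ?X \<omega>) \<omega> \<le> real_cond_exp M G (\<lambda>\<omega>. E \<omega> * m) \<omega>"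
      by (rule S.real_cond_exp_mono[OF _ int_EX int_Em])
        (use payoff_bounds(3)[OF \<tau> m] in \<open>auto simp: E_def\<close>)
    moreover have "AE \<omega> in M. real_cond_exp M G ?X \<omega> \<le> V i \<theta> m \<omega>"
      unfolding G_def by (rule V_ge[OF m \<tau>])
    ultimately show ?thesis
      by eventually_elim (auto simp: Z_def E_def)
  qed
  then have "AE \<omega> in M. V i \<theta> m \<omega> \<le> Z \<omega>"
    using m by (intro V_least) (auto simp: Z_def G_def)
  then show ?thesis
    by eventually_elim (auto simp: Z_def)
qed

definition retirement_rule :: "'a \<Rightarrow> bool" where
  "retirement_rule \<omega> \<longleftrightarrow> \<omega> \<in> space M \<and>
     (\<forall>i \<theta> m. 0 \<le> m \<longrightarrow> (V i \<theta> m \<omega> = m \<longleftrightarrow> h i (Suc \<theta>) \<omega> \<le> (1 - \<beta>) * m))"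

text \<open>The three bounds on \<open>V\<close> hold simultaneously for all rational levels outside a null set;
  continuity of \<open>V\<close> in \<open>m\<close> extends them to all levels.\<close>
lemma AE_retirement_rule: "AE \<omega> in M. retirement_rule \<omega>"
proof -
  let ?Q = "{q \<in> \<rat>. (0::real) \<le> q}"
  have "countable ?Q"
    by (rule countable_subset[OF _ countable_rat]) auto
  then have "AE \<omega> in M. \<forall>i \<theta>. \<forall>q\<in>?Q. q \<le> V i \<theta> q \<omega> \<and> h i (Suc \<theta>) \<omega> + \<beta> * q \<le> V i \<theta> q \<omega>
      \<and> (h i (Suc \<theta>) \<omega> \<le> (1 - \<beta>) * q \<longrightarrow> V i \<theta> q \<omega> \<le> q)"
    unfolding AE_all_countable AE_ball_countable[OF \<open>countable ?Q\<close>]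
    using retire_le_V continue_le_V V_le_retire by (auto intro: AE_conjI)
  then show ?thesis
  proof (rule AE_mp, intro AE_I2 impI)
    fix \<omega>
    assume \<omega>: "\<omega> \<in> space M" and rational: "\<forall>i \<theta>. \<forall>q\<in>?Q. q \<le> V i \<theta> q \<omega> \<and> h i (Suc \<theta>) \<omega> + \<beta> * q \<le> V i \<theta> q \<omega>
      \<and> (h i (Suc \<theta>) \<omega> \<le> (1 - \<beta>) * q \<longrightarrow> V i \<theta> q \<omega> \<le> q)"
    have "V i \<theta> m \<omega> = m \<longleftrightarrow> h i (Suc \<theta>) \<omega> \<le> (1 - \<beta>) * m" if m: "0 \<le> m" for i \<theta> m
    proof -
      have cont: "continuous_on {0..} (\<lambda>m. V i \<theta> m \<omega>)"
        by (rule V_cont[OF \<omega>])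
      have retire: "m - V i \<theta> m \<omega> \<le> 0"
        by (rule nonpos_from_rationals_above[OF _ m])
          (use rational m in \<open>auto intro!: continuous_intros cont\<close>)
      have continue: "h i (Suc \<theta>) \<omega> + \<beta> * m - V i \<theta> m \<omega> \<le> 0"
        by (rule nonpos_from_rationals_above[OF _ m])
          (use rational m in \<open>auto intro!: continuous_intros cont\<close>)
      have stop: "V i \<theta> m \<omega> - m \<le> 0" if "h i (Suc \<theta>) \<omega> \<le> (1 - \<beta>) * m"
      proof (rule nonpos_from_rationals_above[OF _ m])
        fix q :: real
        assume q: "q \<in> \<rat>" "m < q"
        have "(1 - \<beta>) * m \<le> (1 - \<beta>) * q"
          using q beta by (intro mult_left_mono) auto
        then show "V i \<theta> q \<omega> - q \<le> 0"
          using rational that q m by fastforce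
      qed (auto intro!: continuous_intros cont)
      show ?thesis
        using retire continue stop by (auto simp: algebra_simps)
    qed
    then show "retirement_rule \<omega>"
      using \<omega> by (simp add: retirement_rule_def)
  qed
qed

lemma pulls_eq_sigma_idx:
  assumes "retirement_rule \<omega>" "0 \<le> m"
  shows "sigma_idx V i (s i) m \<omega> - enat (s i) = pulls_before_retirement \<beta> (rewards_at \<omega>) s m i"
proof -
  have "(\<lambda>\<theta>. V i \<theta> m \<omega> = m) = (\<lambda>\<theta>. h i (Suc \<theta>) \<omega> \<le> (1 - \<beta>) * m)"
    using assms by (simp add: retirement_rule_def)
  then show ?thesis
    by (simp add: sigma_idx_eq_first_hit pulls_before_retirement_def)
qed

lemma tau_tot_eq_total_pulls:
  "retirement_rule \<omega> \<Longrightarrow> 0 \<le> m \<Longrightarrow> tau_tot V m s \<omega> = total_pulls \<beta> (rewards_at \<omega>) s m"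
  by (simp add: tau_tot_def total_pulls_def pulls_eq_sigma_idx)

lemma value_integral_eq_retirement_integral:
  "retirement_rule \<omega> \<Longrightarrow>
    (LBINT m:{0..}. 1 - epow \<beta> (tau_tot V m s \<omega>)) = retirement_integral \<beta> (rewards_at \<omega>) s"
  unfolding retirement_integral_def by (rule set_lebesgue_integral_cong) (auto simp: tau_tot_eq_total_pulls)

lemma N_idx_eq_Inf_total_pulls:
  "retirement_rule \<omega> \<Longrightarrow> N_idx V t s \<omega> = Inf {m. 0 \<le> m \<and> total_pulls \<beta> (rewards_at \<omega>) s m \<le> enat t}"
  unfolding N_idx_def by (metis tau_tot_eq_total_pulls)

lemma alloc_path_of_alloc: "T \<in> alloc M F s \<Longrightarrow> \<omega> \<in> space M \<Longrightarrow> alloc_path s (\<lambda>t. T t \<omega>)"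
  unfolding alloc_def alloc_path_def by auto

lemma alloc_measurable:
  assumes T: "T \<in> alloc M F s"
  shows "T t \<in> measurable M (count_space UNIV)"
proof -
  have "T t -` {r} \<inter> space M = (\<Union>j. {\<omega> \<in> space M. T (Suc t) \<omega> = (\<lambda>k. T t \<omega> k + unitv j k) \<and> T t \<omega> = r})" for r
    using T unfolding alloc_def by blast
  moreover have "{\<omega> \<in> space M. T (Suc t) \<omega> = (\<lambda>k. T t \<omega> k + unitv j k) \<and> T t \<omega> = r} \<in> sets M" for j r
    using T sets_F unfolding alloc_def by blast
  ultimately show ?thesis
    by (auto simp: measurable_count_space_eq2_countable)
qed

lemma reward_eq_path_reward: "reward \<beta> h T \<omega> = path_reward \<beta> (rewards_at \<omega>) (\<lambda>t. T t \<omega>)"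
  by (simp add: reward_def path_reward_def)

lemma reward_measurable:
  assumes T: "T \<in> alloc M F s"
  shows "reward \<beta> h T \<in> borel_measurable M"
proof -
  text \<open>\<open>h i 0\<close> need not be measurable; it only ever occurs multiplied by \<open>r' i - r i = 0\<close>.\<close>
  define \<Phi> where "\<Phi> t i r' r \<omega> = \<beta> ^ t * (if r' i = 0 then 0 else h i (r' i) \<omega>) * real (r' i - r i)"
    for t i and r' r :: "'i \<Rightarrow> nat" and \<omega>
  have "\<beta> ^ t * h i (T (Suc t) \<omega> i) \<omega> * real (T (Suc t) \<omega> i - T t \<omega> i) = \<Phi> t i (T (Suc t) \<omega>) (T t \<omega>) \<omega>"
    for t i \<omega>
    by (simp add: \<Phi>_def)
  then have reward: "reward \<beta> h T = (\<lambda>\<omega>. \<Sum>i\<in>UNIV. \<Sum>t. \<Phi> t i (T (Suc t) \<omega>) (T t \<omega>) \<omega>)"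
    by (simp add: reward_def fun_eq_iff)
  have "\<Phi> t i r' r \<in> borel_measurable M" for t i r' r
    unfolding \<Phi>_def by (cases "r' i = 0") auto
  then have "(\<lambda>\<omega>. \<Phi> t i r' (T t \<omega>) \<omega>) \<in> borel_measurable M" for t i r'
    by (rule measurable_compose_countable[OF _ alloc_measurable[OF T]])
  then have "(\<lambda>\<omega>. \<Phi> t i (T (Suc t) \<omega>) (T t \<omega>) \<omega>) \<in> borel_measurable M" for t i
    by (rule measurable_compose_countable[OF _ alloc_measurable[OF T]])
  then show ?thesis
    unfolding reward by (intro borel_measurable_sum borel_measurable_suminf)
qed

lemma reward_bounds:
  "T \<in> alloc M F s \<Longrightarrow> \<omega> \<in> space M \<Longrightarrow> 0 \<le> reward \<beta> h T \<omega> \<and> reward \<beta> h T \<omega> \<le> bound / (1 - \<beta>)"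
  using deteriorating_arms.path_reward_bounds[OF deteriorating_arms_at alloc_path_of_alloc]
  by (simp add: reward_eq_path_reward)

lemma reward_integrable: "T \<in> alloc M F s \<Longrightarrow> integrable M (reward \<beta> h T)"
  by (rule P.integrable_const_bound[where B = "bound / (1 - \<beta>)"])
    (use reward_bounds reward_measurable in auto)

definition greedy_alloc :: "('i \<Rightarrow> nat) \<Rightarrow> nat \<Rightarrow> 'a \<Rightarrow> 'i \<Rightarrow> nat" where
  "greedy_alloc s t \<omega> = greedy_path (rewards_at \<omega>) s t"

lemma greedy_arm_measurable: "(\<lambda>\<omega>. greedy_arm (rewards_at \<omega>) r) \<in> measurable (F r) (count_space UNIV)"
proof -
  define best where "best \<omega> = {j. \<forall>k. h k (Suc (r k)) \<omega> \<le> h j (Suc (r j)) \<omega>}" for \<omega>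
  have [measurable]: "h k (Suc (r k)) \<in> borel_measurable (F r)" for k
    by (rule h_measurable_F) (simp_all add: tvec_le)
  have "best -` {S} \<inter> space (F r)
          = {\<omega> \<in> space (F r). \<forall>j. (\<forall>k. h k (Suc (r k)) \<omega> \<le> h j (Suc (r j)) \<omega>) \<longleftrightarrow> j \<in> S}" for S
    unfolding best_def by auto
  also have "\<dots> S \<in> sets (F r)" for S
    by measurable
  finally have "best \<in> measurable (F r) (count_space UNIV)"
    by (simp add: measurable_count_space_eq2_countable)
  then have "(\<lambda>\<omega>. SOME j. j \<in> best \<omega>) \<in> measurable (F r) (count_space UNIV)"
    by (rule measurable_compose) (rule measurable_count_space)
  then show ?thesis
    by (simp add: greedy_arm_def best_def)
qed

lemma greedy_arm_sets: "{\<omega> \<in> space M. greedy_arm (rewards_at \<omega>) r = j} \<in> sets (F r)"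
  using measurable_sets[OF greedy_arm_measurable, of "{j}" r] by (simp add: vimage_def Int_def conj_commute)

lemma greedy_alloc_Suc_eq_iff:
  "greedy_alloc s (Suc t) \<omega> = r \<longleftrightarrow>
    (\<exists>j. 1 \<le> r j \<and> greedy_alloc s t \<omega> = r(j := r j - 1) \<and> greedy_arm (rewards_at \<omega>) (r(j := r j - 1)) = j)"
proof
  assume E: "greedy_alloc s (Suc t) \<omega> = r"
  define j where "j = greedy_arm (rewards_at \<omega>) (greedy_alloc s t \<omega>)"
  have r: "r = (\<lambda>k. greedy_alloc s t \<omega> k + unitv j k)"
    using E by (simp add: greedy_alloc_def j_def)
  then have "greedy_alloc s t \<omega> = r(j := r j - 1)" and "1 \<le> r j"
    by (simp_all add: unitv_def fun_eq_iff)
  then show "\<exists>j. 1 \<le> r j \<and> greedy_alloc s t \<omega> = r(j := r j - 1) \<and> greedy_arm (rewards_at \<omega>) (r(j := r j - 1)) = j"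
    using j_def by auto
next
  assume "\<exists>j. 1 \<le> r j \<and> greedy_alloc s t \<omega> = r(j := r j - 1) \<and> greedy_arm (rewards_at \<omega>) (r(j := r j - 1)) = j"
  then obtain j where j: "1 \<le> r j" "greedy_alloc s t \<omega> = r(j := r j - 1)"
    "greedy_arm (rewards_at \<omega>) (r(j := r j - 1)) = j"
    by blast
  then have "greedy_alloc s (Suc t) \<omega> = (\<lambda>k. (r(j := r j - 1)) k + unitv j k)"
    by (simp add: greedy_alloc_def)
  also have "\<dots> = r"
    using j(1) by (auto simp: unitv_def fun_eq_iff)
  finally show "greedy_alloc s (Suc t) \<omega> = r" .
qed

text \<open>Reaching \<open>r\<close> means being at \<open>r - e\<^sub>j\<close> and choosing \<open>j\<close> there, which is known at \<open>r - e\<^sub>j \<le> r\<close>.\<close>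
lemma greedy_alloc_sets: "{\<omega> \<in> space M. greedy_alloc s t \<omega> = r} \<in> sets (F r)"
proof (induction t arbitrary: r)
  case 0
  have "space M \<in> sets (F r)"
    using sets.top[of "F r"] by simp
  then show ?case
    by (cases "s = r") (simp_all add: greedy_alloc_def)
next
  case (Suc t)
  have "r(j := r j - 1) \<le> r" for j
    by (auto simp: le_fun_def)
  then have "{\<omega> \<in> space M. greedy_alloc s t \<omega> = r(j := r j - 1)}
               \<inter> {\<omega> \<in> space M. greedy_arm (rewards_at \<omega>) (r(j := r j - 1)) = j} \<in> sets (F r)" for j
    using Suc.IH greedy_arm_sets F1 by blast
  moreover have "{\<omega> \<in> space M. greedy_alloc s (Suc t) \<omega> = r}
    = (\<Union>j\<in>{j. 1 \<le> r j}. {\<omega> \<in> space M. greedy_alloc s t \<omega> = r(j := r j - 1)}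
                           \<inter> {\<omega> \<in> space M. greedy_arm (rewards_at \<omega>) (r(j := r j - 1)) = j})"
    unfolding greedy_alloc_Suc_eq_iff by blast
  ultimately show ?case
    by (simp add: sets.finite_UN)
qed

lemma greedy_alloc_in_alloc: "greedy_alloc s \<in> alloc M F s"
proof -
  have "{\<omega> \<in> space M. greedy_alloc s (Suc t) \<omega> = (\<lambda>k. greedy_alloc s t \<omega> k + unitv j k) \<and> greedy_alloc s t \<omega> = r}
          = {\<omega> \<in> space M. greedy_alloc s t \<omega> = r} \<inter> {\<omega> \<in> space M. greedy_arm (rewards_at \<omega>) r = j}" for t j r
    by (auto simp: greedy_alloc_def dest: add_unitv_inj)
  then show ?thesis
    unfolding alloc_def using greedy_alloc_sets greedy_arm_sets by (auto simp: greedy_alloc_def)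
qed

definition retirement_value :: "('i \<Rightarrow> nat) \<Rightarrow> 'a \<Rightarrow> real" where
  "retirement_value s \<omega> = (LBINT m:{0..}. 1 - epow \<beta> (tau_tot V m s \<omega>))"

lemma retirement_value_eq:
  "retirement_rule \<omega> \<Longrightarrow> retirement_value s \<omega> = retirement_integral \<beta> (rewards_at \<omega>) s"
  unfolding retirement_value_def by (rule value_integral_eq_retirement_integral)

lemma AE_greedy_reward_eq: "AE \<omega> in M. reward \<beta> h (greedy_alloc s) \<omega> = retirement_value s \<omega>"
  using AE_retirement_rule
proof eventually_elim
  case (elim \<omega>)
  then have "\<omega> \<in> space M"
    by (simp add: retirement_rule_def)
  then show ?case
    using deteriorating_arms.retirement_integral_greedy[OF deteriorating_arms_at]
    by (simp add: reward_eq_path_reward greedy_alloc_def retirement_value_eq[OF elim])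
qed

lemma AE_reward_le:
  assumes T: "T \<in> alloc M F s"
  shows "AE \<omega> in M. reward \<beta> h T \<omega> \<le> retirement_value s \<omega>"
  using AE_retirement_rule
proof eventually_elim
  case (elim \<omega>)
  have \<omega>: "\<omega> \<in> space M"
    using elim by (simp add: retirement_rule_def)
  show ?case
    using deteriorating_arms.path_reward_le_retirement_integral[OF deteriorating_arms_at[OF \<omega>]
        alloc_path_of_alloc[OF T \<omega>]]
    by (simp add: reward_eq_path_reward retirement_value_eq[OF elim])
qed

lemma AE_reward_eq_iff_synchronized:
  assumes T: "T \<in> alloc M F s"
  shows "AE \<omega> in M. reward \<beta> h T \<omega> = retirement_value s \<omega> \<longleftrightarrow>
    (\<forall>t. \<forall>m>0. (\<Sum>i\<in>UNIV. min (enat (T t \<omega> i - s i)) (sigma_idx V i (s i) m \<omega> - enat (s i)))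
                  = min (enat t) (tau_tot V m s \<omega>))"
  using AE_retirement_rule
proof eventually_elim
  case (elim \<omega>)
  have \<omega>: "\<omega> \<in> space M"
    using elim by (simp add: retirement_rule_def)
  interpret deteriorating_arms \<beta> "rewards_at \<omega>" bound
    by (rule deteriorating_arms_at[OF \<omega>])
  have p: "alloc_path s (\<lambda>t. T t \<omega>)"
    by (rule alloc_path_of_alloc[OF T \<omega>])
  show ?case
    unfolding reward_eq_path_reward retirement_value_eq[OF elim] path_reward_eq_retirement_integral_iff[OF p]
      synchronized_iff[OF p, symmetric]
    by (simp add: pulls_eq_sigma_idx[OF elim] tau_tot_eq_total_pulls[OF elim])
qed

lemma AE_retirement_value_eq_N_idx:
  "AE \<omega> in M. retirement_value s \<omega> = (1 - \<beta>) * (\<Sum>t. \<beta> ^ t * N_idx V t s \<omega>)"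
  using AE_retirement_rule
proof eventually_elim
  case (elim \<omega>)
  have \<omega>: "\<omega> \<in> space M"
    using elim by (simp add: retirement_rule_def)
  show ?case
    using deteriorating_arms.retirement_integral_eq_suminf_Inf[OF deteriorating_arms_at[OF \<omega>]]
    by (simp add: retirement_value_eq[OF elim] N_idx_eq_Inf_total_pulls[OF elim])
qed

lemma retirement_value_measurable [measurable]: "retirement_value s \<in> borel_measurable M"
  by (rule complete_measure.borel_measurable_AE_cong[OF compl
        reward_measurable[OF greedy_alloc_in_alloc] AE_greedy_reward_eq])

lemma retirement_value_integrable: "integrable M (retirement_value s)"
  using integrable_cong_AE[OF reward_measurable[OF greedy_alloc_in_alloc] retirement_value_measurable
      AE_greedy_reward_eq] reward_integrable[OF greedy_alloc_in_alloc] by simp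

lemma is_ess_sup_retirement_value:
  "is_ess_sup M {real_cond_exp M (F s) (reward \<beta> h T) | T. T \<in> alloc M F s}
     (real_cond_exp M (F s) (retirement_value s))"
  unfolding is_ess_sup_def
proof (intro conjI ballI allI impI)
  interpret S: sigma_finite_subalgebra M "F s"
    by (rule sigma_finite_subalgebra_F)
  show "real_cond_exp M (F s) (retirement_value s) \<in> borel_measurable M"
    by (rule borel_measurable_cond_exp2)
  show "AE \<omega> in M. X \<omega> \<le> real_cond_exp M (F s) (retirement_value s) \<omega>"
    if "X \<in> {real_cond_exp M (F s) (reward \<beta> h T) | T. T \<in> alloc M F s}" for X
    using that AE_reward_le reward_integrable retirement_value_integrable
    by (auto intro: S.real_cond_exp_mono)
  fix Z
  assume "\<forall>X\<in>{real_cond_exp M (F s) (reward \<beta> h T) | T. T \<in> alloc M F s}. AE \<omega> in M. X \<omega> \<le> Z \<omega>"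
  then have "AE \<omega> in M. real_cond_exp M (F s) (reward \<beta> h (greedy_alloc s)) \<omega> \<le> Z \<omega>"
    using greedy_alloc_in_alloc by blast
  moreover have "AE \<omega> in M. real_cond_exp M (F s) (reward \<beta> h (greedy_alloc s)) \<omega>
                             = real_cond_exp M (F s) (retirement_value s) \<omega>"
    by (rule S.real_cond_exp_cong[OF AE_greedy_reward_eq reward_measurable[OF greedy_alloc_in_alloc]
          retirement_value_measurable])
  ultimately show "AE \<omega> in M. real_cond_exp M (F s) (retirement_value s) \<omega> \<le> Z \<omega>"
    by eventually_elim simp
qed

lemma cond_exp_retirement_value_eq_N_idx:
  "AE \<omega> in M. real_cond_exp M (F s) (retirement_value s) \<omega>
     = (1 - \<beta>) * real_cond_exp M (F s) (\<lambda>\<omega>. \<Sum>t. \<beta> ^ t * N_idx V t s \<omega>) \<omega>"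
proof -
  interpret S: sigma_finite_subalgebra M "F s"
    by (rule sigma_finite_subalgebra_F)
  let ?N = "\<lambda>\<omega>. \<Sum>t. \<beta> ^ t * N_idx V t s \<omega>"
  have "AE \<omega> in M. retirement_value s \<omega> / (1 - \<beta>) = ?N \<omega>"
    using AE_retirement_value_eq_N_idx[of s] by eventually_elim (use beta in simp)
  then have N_measurable [measurable]: "?N \<in> borel_measurable M"
    by (rule complete_measure.borel_measurable_AE_cong[OF compl, rotated]) measurable
  have "integrable M (\<lambda>\<omega>. retirement_value s \<omega> / (1 - \<beta>))"
    using retirement_value_integrable by simp
  then have "integrable M ?N"
    by (rule integrable_cong_AE_imp[OF _ N_measurable]) (use \<open>AE \<omega> in M. _ = ?N \<omega>\<close> in simp)
  have "AE \<omega> in M. real_cond_exp M (F s) (retirement_value s) \<omega> = real_cond_exp M (F s) (\<lambda>\<omega>. (1 - \<beta>) * ?N \<omega>) \<omega>"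
    by (rule S.real_cond_exp_cong[OF AE_retirement_value_eq_N_idx[of s]]) measurable
  moreover have "AE \<omega> in M. real_cond_exp M (F s) (\<lambda>\<omega>. (1 - \<beta>) * ?N \<omega>) \<omega> = (1 - \<beta>) * real_cond_exp M (F s) ?N \<omega>"
    by (rule S.real_cond_exp_cmult[OF \<open>integrable M ?N\<close>])
  ultimately show ?thesis
    by eventually_elim simp
qed

lemma optimal_iff_synchronized:
  assumes T: "T \<in> alloc M F s"
  shows "(AE \<omega> in M. real_cond_exp M (F s) (reward \<beta> h T) \<omega> = real_cond_exp M (F s) (retirement_value s) \<omega>)
    \<longleftrightarrow> (AE \<omega> in M. \<forall>t. \<forall>m>0.
          (\<Sum>i\<in>UNIV. min (enat (T t \<omega> i - s i)) (sigma_idx V i (s i) m \<omega> - enat (s i)))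
          = min (enat t) (tau_tot V m s \<omega>))"
proof -
  interpret S: sigma_finite_subalgebra M "F s"
    by (rule sigma_finite_subalgebra_F)
  have "(AE \<omega> in M. real_cond_exp M (F s) (reward \<beta> h T) \<omega> = real_cond_exp M (F s) (retirement_value s) \<omega>)
    \<longleftrightarrow> (AE \<omega> in M. reward \<beta> h T \<omega> = retirement_value s \<omega>)"
    using S.AE_eq_if_real_cond_exp_eq[OF reward_integrable[OF T] retirement_value_integrable AE_reward_le[OF T]]
      S.real_cond_exp_cong[OF _ reward_measurable[OF T] retirement_value_measurable]
    by blast
  also have "\<dots> \<longleftrightarrow> (AE \<omega> in M. \<forall>t. \<forall>m>0.
          (\<Sum>i\<in>UNIV. min (enat (T t \<omega> i - s i)) (sigma_idx V i (s i) m \<omega> - enat (s i)))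
          = min (enat t) (tau_tot V m s \<omega>))"
    using AE_reward_eq_iff_synchronized[OF T] by (auto elim: AE_mp intro: AE_I2)
  finally show ?thesis .
qed

end

theorem theorem7p2:
  fixes M :: "'a measure"
    and F :: "('i::finite \<Rightarrow> nat) \<Rightarrow> 'a measure"
    and \<beta> :: real
    and h :: "'i \<Rightarrow> nat \<Rightarrow> 'a \<Rightarrow> real"
    and V :: "'i \<Rightarrow> nat \<Rightarrow> real \<Rightarrow> 'a \<Rightarrow> real"
    and s :: "'i \<Rightarrow> nat"
  assumes prob: "prob_space M"
    and compl: "complete_measure M"
    and beta: "0 < \<beta>" "\<beta> < 1"
    and subalg: "\<And>r. subalgebra M (F r)"
    and F1: "\<And>r q. r \<le> q \<Longrightarrow> sets (F r) \<subseteq> sets (F q)"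
    and F2: "null_sets M \<subseteq> sets (F (\<lambda>_. 0))"
    and h_pos: "\<And>i t \<omega>. 1 \<le> t \<Longrightarrow> \<omega> \<in> space M \<Longrightarrow> 0 < h i t \<omega>"
    and h_decr: "\<And>i t \<omega>. 1 \<le> t \<Longrightarrow> \<omega> \<in> space M \<Longrightarrow> h i (Suc t) \<omega> \<le> h i t \<omega>"
    and h_bdd: "\<exists>B. \<forall>i t. \<forall>\<omega>\<in>space M. 1 \<le> t \<longrightarrow> h i t \<omega> \<le> B"
    and h_pred: "\<And>i t. 1 \<le> t \<Longrightarrow> h i t \<in> borel_measurable (F (tvec (t - 1) i))"
    and V_ess: "\<And>i t m. 0 \<le> m \<Longrightarrow>
       is_ess_sup M {real_cond_exp M (F (tvec t i)) (payoff \<beta> h i t m \<tau>) | \<tau>. \<tau> \<in> stop_times M F i t}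
         (V i t m)"
    and V_cont: "\<And>i t \<omega>. \<omega> \<in> space M \<Longrightarrow> continuous_on {0..} (\<lambda>m. V i t m \<omega>)"
  shows "is_ess_sup M {real_cond_exp M (F s) (reward \<beta> h T) | T. T \<in> alloc M F s}
           (real_cond_exp M (F s) (\<lambda>\<omega>. LBINT m:{0..}. 1 - epow \<beta> (tau_tot V m s \<omega>)))
       \<and> (AE \<omega> in M. real_cond_exp M (F s) (\<lambda>\<omega>. LBINT m:{0..}. 1 - epow \<beta> (tau_tot V m s \<omega>)) \<omega>
              = (1 - \<beta>) * real_cond_exp M (F s) (\<lambda>\<omega>. \<Sum>t. \<beta> ^ t * N_idx V t s \<omega>) \<omega>)
       \<and> (\<forall>T\<in>alloc M F s.
            (AE \<omega> in M. real_cond_exp M (F s) (reward \<beta> h T) \<omega>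
                 = real_cond_exp M (F s) (\<lambda>\<omega>. LBINT m:{0..}. 1 - epow \<beta> (tau_tot V m s \<omega>)) \<omega>)
            \<longleftrightarrow> (AE \<omega> in M. \<forall>t. \<forall>m>0.
                  (\<Sum>i\<in>UNIV. min (enat (T t \<omega> i - s i)) (sigma_idx V i (s i) m \<omega> - enat (s i)))
                  = min (enat t) (tau_tot V m s \<omega>)))"
proof -
  interpret deteriorating_bandit M F \<beta> h V
    by (rule deteriorating_bandit.intro[OF prob compl beta subalg F1 h_pos h_decr h_bdd h_pred V_ess V_cont])
  show ?thesis
    using is_ess_sup_retirement_value cond_exp_retirement_value_eq_N_idx optimal_iff_synchronized
    unfolding retirement_value_def[abs_def] by blast
qed

end
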